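(* Let $G$ be a group, $s,t\in G$ with $s\neq t$, and $\Gamma=\Phi(G,\{s,t\})$. (a) If $I\Gamma$ is a $G$-graph, then there exists a map $f:\langle s,t\rangle\to\langle s,t\rangle$ such that $f\circ f=\mathrm{id}$, $f(e)=e$, and for every $x\in\langle s,t\rangle$ there exist $m,n\in\mathbb{Z}$ with $f(sx)=t^mf(x)$ and $f(tx)=s^nf(x)$. (b) Conversely, if there exists a group homomorphism $f:\langle s,t\rangle\to\langle s,t\rangle$ such that $f\circ f=\mathrm{id}$, $f(e)=e$, and for every $x\in\langle s,t\rangle$ there exist $m,n\in\mathbb{Z}$ with $f(sx)=t^mf(x)$ and $f(tx)=s^nf(x)$, then $I\Gamma$ is a $G$-graph.
   Context: $e$ is the identity of $G$. $\Phi(G,\{s,t\})$ is the multigraph with vertex set $V_s\cup V_t$, $V_s=\{\langle s\rangle x: x\in G\}$, $V_t=\{\langle t\rangle y: y\in G\}$ (right cosets), with one edge labeled $g$ between $\langle s\rangle x$ and $\langle t\rangle y$ for each $g\in\langle s\rangle x\cap\langle t\rangle y$, and no other edges. More generally, for a group $K$ and a multiset $S$ of elements of $K$, $\Phi(K,S)$ has vertex set the union over members $s$ of $S$ (with multiplicity) of the right cosets of $\langle s\rangle$, with one edge labeled $g$ between $\langle s\rangle x$ and $\langle t\rangle y$ ($s,t$ distinct members of $S$) for each $g$ in their intersection; a $G$-graph is a multigraph isomorphic (ignoring labels) to some $\Phi(K,S)$. For a multigraph $\Gamma=(V,E,\psi)$, the incidence graph $I\Gamma$ is the simple graph with vertex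 set $V\cup E$ in which each $a\in E$ is adjacent exactly to its end-points. *)

theory Defs
  imports "HOL-Algebra.Algebra"
begin

text \<open>A multigraph is a triple (V, E, psi): vertex set, edge set, and the map
  sending each edge to the set of its end-points.\<close>
type_synonym ('v, 'e) mgraph = "'v set \<times> 'e set \<times> ('e \<Rightarrow> 'v set)"

definition mg_iso :: "('v, 'e) mgraph \<Rightarrow> ('w, 'f) mgraph \<Rightarrow> bool" where
  "mg_iso \<Gamma> \<Delta> \<longleftrightarrow>
     (case \<Gamma> of (V1, E1, psi1) \<Rightarrow> case \<Delta> of (V2, E2, psi2) \<Rightarrow>
       (\<exists>\<alpha> \<beta>. bij_betw \<alpha> V1 V2 \<and> bij_betw \<beta> E1 E2 \<and>
              (\<forall>a\<in>E1. psi2 (\<beta> a) = \<alpha> ` psi1 a)))"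

text \<open>Phi(K,S) for a list S (a multiset with an order on its members).\<close>
definition Phi_vertices :: "('k, 'm) monoid_scheme \<Rightarrow> 'k list \<Rightarrow> (nat \<times> 'k set) set" where
  "Phi_vertices K S = {(i, C). i < length S \<and> C \<in> rcosets\<^bsub>K\<^esub> (generate K {S ! i})}"

definition Phi :: "('k, 'm) monoid_scheme \<Rightarrow> 'k list
    \<Rightarrow> (nat \<times> 'k set, (nat \<times> 'k set) \<times> (nat \<times> 'k set) \<times> 'k) mgraph" where
  "Phi K S =
     (Phi_vertices K S,
      {(u, w, g). u \<in> Phi_vertices K S \<and> w \<in> Phi_vertices K S \<and> fst u < fst w
                  \<and> g \<in> snd u \<inter> snd w},
      (\<lambda>(u, w, g). {u, w}))"

definition incidence :: "('v, 'e) mgraph \<Rightarrow> ('v + 'e, 'v \<times> 'e) mgraph" where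
  "incidence \<Gamma> = (case \<Gamma> of (V, E, psi) \<Rightarrow>
     (V <+> E, {(v, a). a \<in> E \<and> v \<in> psi a}, (\<lambda>(v, a). {Inl v, Inr a})))"

text \<open>G-graph, with the group K taken on carrier type 'k.\<close>
definition G_graph :: "'k itself \<Rightarrow> ('v, 'e) mgraph \<Rightarrow> bool" where
  "G_graph (_::'k itself) \<Gamma> \<longleftrightarrow>
     (\<exists>(K::'k monoid) S. group K \<and> set S \<subseteq> carrier K \<and> mg_iso \<Gamma> (Phi K S))"

end

theory Submission
  imports Defs
begin

text \<open>The edge \<open>\<one>\<close> of \<open>\<Gamma>\<close> is a vertex of \<open>I\<Gamma>\<close> with exactly the two non-adjacent neighbours
  \<open>\<langle>s\<rangle>\<close> and \<open>\<langle>t\<rangle>\<close>. In a simple \<open>\<Phi>(K, S)\<close> a vertex \<open>\<langle>b\<rangle>y\<close> with two non-adjacent neighbours is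
  fixed by right multiplication with the involution \<open>y\<inverse>by\<close>, which swaps the two neighbours, and
  right multiplications are automorphisms of \<open>\<Phi>(K, S)\<close>. Transported to \<open>I\<Gamma>\<close>, this gives an
  involutive automorphism fixing \<open>\<one>\<close> and swapping \<open>\<langle>s\<rangle>\<close> and \<open>\<langle>t\<rangle>\<close>. Passing from an edge to the
  edges sharing one of its end-points, i.e. multiplying by \<open>s\<close> or \<open>t\<close> on the left, one sees that for
  \<open>g \<in> \<langle>s, t\<rangle>\<close> it maps the edge \<open>g\<close> to an edge \<open>f(g)\<close>, and \<open>\<langle>s\<rangle>g\<close>, \<open>\<langle>t\<rangle>g\<close> to \<open>\<langle>t\<rangle>f(g)\<close>, \<open>\<langle>s\<rangle>f(g)\<close>.

  Conversely, given the automorphism \<open>f\<close>, let the group of order two act on \<open>\<langle>s, t\<rangle>\<close> by \<open>f\<close> and let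
  \<open>Q\<close> be any group structure on a transversal \<open>T\<close> of the right cosets of \<open>\<langle>s, t\<rangle>\<close>. In
  \<open>K = (\<langle>s, t\<rangle> \<rtimes> C\<^sub>2) \<times> Q\<close> with \<open>a = ((s, 0), 1)\<close> and \<open>b = ((1, 1), 1)\<close>, the cosets of \<open>\<langle>a\<rangle>\<close>
  correspond to the vertices of \<open>\<Gamma>\<close>, the cosets of \<open>\<langle>b\<rangle>\<close> (of size two) to its edges and the
  elements of \<open>K\<close> to the incidences, so \<open>I\<Gamma> \<cong> \<Phi>(K, [a, b])\<close>. Writing elements of \<open>G\<close> as \<open>hx\<close> with
  \<open>h \<in> \<langle>s, t\<rangle>\<close> and \<open>x \<in> T\<close> transports \<open>K\<close> onto the carrier \<open>G \<times> bool\<close>.\<close>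

section \<open>Cosets, transversals and transported groups\<close>

context group
begin

lemma rcosets_eq_r_coset:
  assumes "subgroup U G" "C \<in> rcosets U" "g \<in> C"
  shows "C = U #> g"
proof -
  obtain x where "x \<in> carrier G" "C = U #> x"
    using assms(2) by (auto simp: RCOSETS_def)
  then show ?thesis
    using repr_independence assms(1,3) by blast
qed

lemma r_coset_eq_iff_mem:
  assumes "subgroup U G" "x \<in> carrier G" "y \<in> carrier G"
  shows "U #> x = U #> y \<longleftrightarrow> y \<in> U #> x"
  using repr_independence[OF _ assms(2,1)] repr_independenceD[OF assms(1,3)] by blast

lemma r_coset_mult_left:
  assumes "subgroup U G" "c \<in> U" "g \<in> carrier G"
  shows "U #> (c \<otimes> g) = U #> g"
  using repr_independence[OF rcosI[OF assms(2) subgroup.subset[OF assms(1)] assms(3)] assms(3,1)]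
  by simp

lemma r_coset_generate_eq_imp_pow:
  assumes a: "a \<in> carrier G" and x: "x \<in> carrier G" and y: "y \<in> carrier G"
    and eq: "generate G {a} #> y = generate G {a} #> x"
  obtains m :: int where "y = a [^] m \<otimes> x"
proof -
  have "subgroup (generate G {a}) G"
    using a by (simp add: generate_is_subgroup)
  then have "y \<in> generate G {a} #> x"
    using eq y rcos_self by blast
  then show thesis
    using that generate_pow[OF a] by (auto simp: r_coset_def)
qed

lemma r_coset_conj_invariant:
  assumes U: "subgroup U G" and b: "b \<in> U" and y: "y \<in> carrier G"
  shows "U #> y #> (inv y \<otimes> b \<otimes> y) = U #> y"
proof -
  have "b \<in> carrier G"
    using subgroup.mem_carrier[OF U b] .
  then have "inv y \<otimes> b \<otimes> y \<in> carrier G" "y \<otimes> (inv y \<otimes> b \<otimes> y) = b \<otimes> y"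
    using y by (simp_all add: m_assoc[symmetric])
  then show ?thesis
    using coset_mult_assoc[OF subgroup.subset[OF U] y] r_coset_mult_left[OF U b y] by simp
qed

lemma r_coset_generate_conj_stable:
  assumes b: "b \<in> carrier G" and y: "y \<in> carrier G"
  obtains k where "k \<in> carrier G" "generate G {b} #> y #> k = generate G {b} #> y"
    and "k = \<one> \<Longrightarrow> generate G {b} #> y = {y}"
proof -
  define k where "k = inv y \<otimes> b \<otimes> y"
  have k: "k \<in> carrier G" "y \<otimes> k = b \<otimes> y"
    using b y by (simp_all add: k_def m_assoc[symmetric])
  have "generate G {b} #> y #> k = generate G {b} #> y"
    using r_coset_conj_invariant[OF generate_is_subgroup generate.incl] b y by (simp add: k_def)
  moreover have "generate G {b} #> y = {y}" if "k = \<one>"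
  proof -
    have "b \<otimes> y = y"
      using k(2) y that by simp
    then have "b = \<one>"
      using b y by simp
    then show ?thesis
      using y by (simp add: generate_one r_coset_def)
  qed
  ultimately show thesis
    using that k(1) by blast
qed

lemma generate_left_mult_invariant:
  assumes A: "A \<subseteq> carrier G" and x: "x \<in> generate G A" and g: "g \<in> carrier G"
    and step: "\<And>c g. c \<in> A \<Longrightarrow> g \<in> carrier G \<Longrightarrow> P (c \<otimes> g) \<longleftrightarrow> P g"
  shows "P (x \<otimes> g) \<longleftrightarrow> P g"
  using x g
proof (induction arbitrary: g)
  case one
  then show ?case
    by simp
next
  case (incl c)
  then show ?case
    using step by blast
next
  case (inv c)
  then have c: "c \<in> carrier G"
    using A by blast
  have "P (c \<otimes> (inv c \<otimes> g)) \<longleftrightarrow> P (inv c \<otimes> g)"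
    using step[OF inv(1)] c inv(2) by simp
  then show ?case
    using c inv(2) by (simp add: m_assoc[symmetric])
next
  case (eng h1 h2)
  then have "h1 \<in> carrier G" "h2 \<in> carrier G"
    using generate_in_carrier[OF A] by blast+
  then show ?case
    using eng by (simp add: m_assoc)
qed

definition coset_rep :: "'a set \<Rightarrow> 'a \<Rightarrow> 'a" where
  "coset_rep H g = (SOME x. x \<in> H #> g)"

definition coset_part :: "'a set \<Rightarrow> 'a \<Rightarrow> 'a" where
  "coset_part H g = g \<otimes> inv (coset_rep H g)"

definition transversal :: "'a set \<Rightarrow> 'a set" where
  "transversal H = coset_rep H ` carrier G"

lemma coset_rep_in:
  assumes "subgroup H G" "g \<in> carrier G"
  shows "coset_rep H g \<in> H #> g"
  unfolding coset_rep_def using rcos_self[OF assms(2,1)] by (rule someI)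

lemma coset_rep_closed:
  assumes "subgroup H G" "g \<in> carrier G"
  shows "coset_rep H g \<in> carrier G"
  using coset_rep_in[OF assms] subgroup.elemrcos_carrier[OF assms(1) is_group assms(2)] by blast

lemma transversal_subset: "subgroup H G \<Longrightarrow> transversal H \<subseteq> carrier G"
  using coset_rep_closed by (auto simp: transversal_def)

lemma transversal_nonempty: "transversal H \<noteq> {}"
  by (auto simp: transversal_def)

lemma coset_part_closed:
  assumes H: "subgroup H G" and g: "g \<in> carrier G"
  shows "coset_part H g \<in> H"
proof -
  have "coset_rep H g \<otimes> inv g \<in> H"
    using subgroup.rcos_module_imp[OF H is_group g coset_rep_in[OF H g]] .
  then have "inv (coset_rep H g \<otimes> inv g) \<in> H"
    using subgroup.m_inv_closed[OF H] by blast
  then show ?thesis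
    using g coset_rep_closed[OF H g] by (simp add: coset_part_def inv_mult_group)
qed

lemma coset_part_mult_rep:
  "subgroup H G \<Longrightarrow> g \<in> carrier G \<Longrightarrow> coset_part H g \<otimes> coset_rep H g = g"
  using coset_rep_closed by (simp add: coset_part_def m_assoc)

lemma transversal_unique:
  assumes H: "subgroup H G" and h: "h \<in> H" "h' \<in> H" and x: "x \<in> transversal H" "x' \<in> transversal H"
    and eq: "h \<otimes> x = h' \<otimes> x'"
  shows "h = h'" and "x = x'"
proof -
  obtain g g' where g: "g \<in> carrier G" "g' \<in> carrier G" "x = coset_rep H g" "x' = coset_rep H g'"
    using x by (auto simp: transversal_def)
  have carrier: "x \<in> carrier G" "x' \<in> carrier G" "h \<in> carrier G" "h' \<in> carrier G"
    using x transversal_subset[OF H] h subgroup.subset[OF H] by auto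
  have "H #> g = H #> x"
    using repr_independence[OF coset_rep_in[OF H g(1)] g(1) H] g(3) by simp
  also have "\<dots> = H #> x'"
    using r_coset_mult_left[OF H h(1) carrier(1)] r_coset_mult_left[OF H h(2) carrier(2)] eq by simp
  also have "\<dots> = H #> g'"
    using repr_independence[OF coset_rep_in[OF H g(2)] g(2) H] g(4) by simp
  finally show "x = x'"
    using g by (simp add: coset_rep_def)
  then show "h = h'"
    using eq carrier by simp
qed

lemma
  assumes H: "subgroup H G" and h: "h \<in> H" and x: "x \<in> transversal H"
  shows coset_rep_mult_transversal: "coset_rep H (h \<otimes> x) = x"
    and coset_part_mult_transversal: "coset_part H (h \<otimes> x) = h"
proof -
  have g: "h \<otimes> x \<in> carrier G"
    using h x subgroup.subset[OF H] transversal_subset[OF H] by auto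
  have rep: "coset_rep H (h \<otimes> x) \<in> transversal H"
    using g by (simp add: transversal_def)
  show "coset_rep H (h \<otimes> x) = x" "coset_part H (h \<otimes> x) = h"
    using transversal_unique[OF H coset_part_closed[OF H g] h rep x] coset_part_mult_rep[OF H g]
    by simp_all
qed

lemma bij_betw_transversal:
  assumes H: "subgroup H G"
  shows "bij_betw (\<lambda>(h, x). h \<otimes> x) (H \<times> transversal H) (carrier G)"
proof (rule bij_betw_imageI)
  show "inj_on (\<lambda>(h, x). h \<otimes> x) (H \<times> transversal H)"
    using transversal_unique[OF H] by (auto simp: inj_on_def)
  have "g \<in> (\<lambda>(h, x). h \<otimes> x) ` (H \<times> transversal H)" if "g \<in> carrier G" for g
    using that coset_part_mult_rep[OF H that] coset_part_closed[OF H that]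
    by (force simp: transversal_def)
  then show "(\<lambda>(h, x). h \<otimes> x) ` (H \<times> transversal H) = carrier G"
    using subgroup.subset[OF H] transversal_subset[OF H] by auto
qed

lemma r_coset_eq_iff_coset_part:
  assumes H: "subgroup H G" and U: "subgroup U G" "U \<subseteq> H"
    and g: "g \<in> carrier G" and g': "g' \<in> carrier G"
  shows "U #> g = U #> g' \<longleftrightarrow>
    (\<exists>k\<in>U. coset_part H g' = k \<otimes> coset_part H g) \<and> coset_rep H g' = coset_rep H g"
proof
  assume "U #> g = U #> g'"
  then obtain k where k: "k \<in> U" "g' = k \<otimes> g"
    using r_coset_eq_iff_mem[OF U(1) g g'] by (auto simp: r_coset_def)
  have "k \<in> H" "k \<in> carrier G"
    using k(1) U subgroup.subset[OF H] by auto
  then have "g' = (k \<otimes> coset_part H g) \<otimes> coset_rep H g" "k \<otimes> coset_part H g \<in> H"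
    using k(2) coset_part_mult_rep[OF H g] coset_part_closed[OF H g] coset_rep_closed[OF H g]
      subgroup.m_closed[OF H] subgroup.subset[OF H]
    by (auto simp: m_assoc)
  then show "(\<exists>k\<in>U. coset_part H g' = k \<otimes> coset_part H g) \<and> coset_rep H g' = coset_rep H g"
    using coset_rep_mult_transversal[OF H] coset_part_mult_transversal[OF H] k(1) g
    by (auto simp: transversal_def)
next
  assume "(\<exists>k\<in>U. coset_part H g' = k \<otimes> coset_part H g) \<and> coset_rep H g' = coset_rep H g"
  then obtain k where k: "k \<in> U" "coset_part H g' = k \<otimes> coset_part H g"
    and rep: "coset_rep H g' = coset_rep H g" by blast
  have "k \<in> carrier G"
    using k(1) U subgroup.subset[OF H] by auto
  then have "g' = k \<otimes> g"
    using coset_part_mult_rep[OF H g'] coset_part_mult_rep[OF H g] k rep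
      coset_part_closed[OF H g] coset_rep_closed[OF H g] subgroup.subset[OF H]
    by (metis m_assoc subsetD)
  then show "U #> g = U #> g'"
    using r_coset_mult_left[OF U(1) k(1) g] by simp
qed

end

definition transport_group :: "('a, 'm) monoid_scheme \<Rightarrow> ('a \<Rightarrow> 'c) \<Rightarrow> 'c set \<Rightarrow> 'c monoid" where
  "transport_group M \<phi> C =
    \<lparr>carrier = C,
     monoid.mult = (\<lambda>x y. \<phi> (inv_into (carrier M) \<phi> x \<otimes>\<^bsub>M\<^esub> inv_into (carrier M) \<phi> y)),
     one = \<phi> \<one>\<^bsub>M\<^esub>\<rparr>"

lemma carrier_transport_group [simp]: "carrier (transport_group M \<phi> C) = C"
  by (simp add: transport_group_def)

context group
begin

lemma
  assumes \<phi>: "bij_betw \<phi> (carrier G) C"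
  shows group_transport_group: "group (transport_group G \<phi> C)"
    and iso_transport_group: "\<phi> \<in> iso G (transport_group G \<phi> C)"
proof -
  define \<psi> where "\<psi> = inv_into (carrier G) \<phi>"
  have \<psi>: "\<psi> x \<in> carrier G" "\<phi> (\<psi> x) = x" if "x \<in> C" for x
    using that \<phi> unfolding \<psi>_def bij_betw_def by (auto intro: inv_into_into f_inv_into_f)
  have \<psi>_\<phi>: "\<psi> (\<phi> u) = u" and \<phi>_C: "\<phi> u \<in> C" if "u \<in> carrier G" for u
    using that \<phi> unfolding \<psi>_def bij_betw_def by auto
  have mult: "x \<otimes>\<^bsub>transport_group G \<phi> C\<^esub> y = \<phi> (\<psi> x \<otimes> \<psi> y)" for x y
    by (simp add: transport_group_def \<psi>_def)
  have one: "\<one>\<^bsub>transport_group G \<phi> C\<^esub> = \<phi> \<one>"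
    by (simp add: transport_group_def)
  show "group (transport_group G \<phi> C)"
  proof (rule groupI, unfold carrier_transport_group mult one)
    show "\<exists>y\<in>C. \<phi> (\<psi> y \<otimes> \<psi> x) = \<phi> \<one>" if "x \<in> C" for x
      using that by (intro bexI[of _ "\<phi> (inv (\<psi> x))"]) (simp_all add: \<psi> \<psi>_\<phi> \<phi>_C)
  qed (simp_all add: \<psi> \<psi>_\<phi> \<phi>_C m_assoc)
  show "\<phi> \<in> iso G (transport_group G \<phi> C)"
    using \<phi> \<phi>_C unfolding iso_def hom_def by (auto simp: mult \<psi>_\<phi>)
qed

end

lemma ex_group_on:
  assumes "T \<noteq> {}"
  obtains Q :: "'a monoid" where "group Q" "carrier Q = T"
proof (cases "finite T")
  case True
  have "{0..<int (card T)} \<approx> T"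
    using True by (subst eqpoll_iff_card) auto
  moreover have "card T \<noteq> 0"
    using True assms by simp
  ultimately obtain \<phi> where \<phi>: "bij_betw \<phi> (carrier (integer_mod_group (card T))) T"
    by (auto simp: eqpoll_def carrier_integer_mod_group)
  show thesis
    using that[OF group.group_transport_group[OF group_integer_mod_group \<phi>]] by simp
next
  case False
  then obtain \<phi> where \<phi>: "bij_betw \<phi> (carrier (free_Abelian_group T)) T"
    using eqpoll_free_Abelian_group_infinite by (auto simp: eqpoll_def)
  show thesis
    using that[OF group.group_transport_group[OF group_free_Abelian_group \<phi>]] by simp
qed

lemma iso_r_coset_generate_eq_iff:
  assumes "group M" "group K" and \<phi>: "\<phi> \<in> iso M K"
    and a: "a \<in> carrier M" and x: "x \<in> carrier M" and y: "y \<in> carrier M"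
  shows "generate K {\<phi> a} #>\<^bsub>K\<^esub> \<phi> x = generate K {\<phi> a} #>\<^bsub>K\<^esub> \<phi> y \<longleftrightarrow>
    generate M {a} #>\<^bsub>M\<^esub> x = generate M {a} #>\<^bsub>M\<^esub> y"
proof -
  interpret M: group M by fact
  interpret group_hom M K \<phi>
    using assms by (auto simp: group_hom_def group_hom_axioms_def iso_def)
  have inj: "inj_on \<phi> (carrier M)"
    using \<phi> by (auto simp: iso_def bij_betw_def)
  have U: "generate M {a} \<subseteq> carrier M"
    using M.generate_in_carrier a by blast
  have image: "\<phi> ` generate M {a} #>\<^bsub>K\<^esub> \<phi> z = \<phi> ` (generate M {a} #>\<^bsub>M\<^esub> z)"
    if "z \<in> carrier M" for z
    using that U unfolding r_coset_def by (force simp: subset_iff)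
  show ?thesis
    using generate_img[of "{a}"] a image[OF x] image[OF y]
      inj_on_image_eq_iff[OF inj M.r_coset_subset_G[OF U x] M.r_coset_subset_G[OF U y]]
    by simp
qed

definition mg_adj :: "('v, 'e) mgraph \<Rightarrow> 'v \<Rightarrow> 'v \<Rightarrow> bool" where
  "mg_adj \<Gamma> p q \<longleftrightarrow> (case \<Gamma> of (V, E, \<psi>) \<Rightarrow> \<exists>a\<in>E. \<psi> a = {p, q})"

lemma mg_adj_commute: "mg_adj \<Gamma> p q \<Longrightarrow> mg_adj \<Gamma> q p"
  unfolding mg_adj_def by (auto split: prod.splits simp: insert_commute)

lemma mg_isoI:
  assumes "bij_betw \<alpha> V1 V2" "bij_betw \<beta> E1 E2" "\<And>a. a \<in> E1 \<Longrightarrow> \<psi>2 (\<beta> a) = \<alpha> ` \<psi>1 a"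
  shows "mg_iso (V1, E1, \<psi>1) (V2, E2, \<psi>2)"
  using assms unfolding mg_iso_def by blast

lemma mg_iso_adjE:
  assumes iso: "mg_iso (V1, E1, \<psi>1) (V2, E2, \<psi>2)"
    and ends: "\<forall>a\<in>E1. \<psi>1 a \<subseteq> V1" and simple: "inj_on \<psi>1 E1"
  obtains \<alpha> where "bij_betw \<alpha> V1 V2"
    and "\<And>p q. p \<in> V1 \<Longrightarrow> q \<in> V1 \<Longrightarrow>
           mg_adj (V1, E1, \<psi>1) p q \<longleftrightarrow> mg_adj (V2, E2, \<psi>2) (\<alpha> p) (\<alpha> q)"
    and "inj_on \<psi>2 E2"
proof -
  obtain \<alpha> \<beta> where \<alpha>: "bij_betw \<alpha> V1 V2" and \<beta>: "bij_betw \<beta> E1 E2"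
    and ends_\<beta>: "\<forall>a\<in>E1. \<psi>2 (\<beta> a) = \<alpha> ` \<psi>1 a"
    using iso unfolding mg_iso_def by auto
  have inj: "inj_on \<alpha> V1" and E2: "E2 = \<beta> ` E1"
    using \<alpha> \<beta> by (auto simp: bij_betw_def)
  have ends_eq: "\<psi>2 (\<beta> a) = \<psi>2 (\<beta> a') \<longleftrightarrow> \<psi>1 a = \<psi>1 a'" if "a \<in> E1" "a' \<in> E1" for a a'
    using that ends ends_\<beta> inj_on_image_eq_iff[OF inj] by metis
  have "\<psi>1 a = {p, q} \<longleftrightarrow> \<psi>2 (\<beta> a) = {\<alpha> p, \<alpha> q}" if "a \<in> E1" "p \<in> V1" "q \<in> V1" for a p q
    using that ends ends_\<beta> inj_on_image_eq_iff[OF inj, of "\<psi>1 a" "{p, q}"] by auto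
  then have "mg_adj (V1, E1, \<psi>1) p q \<longleftrightarrow> mg_adj (V2, E2, \<psi>2) (\<alpha> p) (\<alpha> q)"
    if "p \<in> V1" "q \<in> V1" for p q
    using that unfolding mg_adj_def E2 by auto
  moreover have "inj_on \<psi>2 E2"
    using simple ends_eq \<beta> unfolding E2 by (auto simp: inj_on_def bij_betw_def)
  ultimately show thesis using \<alpha> that by blast
qed

lemma bij_adj_neighbour_iff:
  assumes \<alpha>: "bij_betw \<alpha> V W" and v: "v \<in> V"
    and adj: "\<And>p q. p \<in> V \<Longrightarrow> q \<in> V \<Longrightarrow> A p q \<longleftrightarrow> B (\<alpha> p) (\<alpha> q)"
    and A_V: "\<And>p q. A p q \<Longrightarrow> q \<in> V" and B_W: "\<And>p q. B p q \<Longrightarrow> q \<in> W"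
  shows "B (\<alpha> v) z \<longleftrightarrow> (\<exists>u. A v u \<and> z = \<alpha> u)"
proof
  assume "B (\<alpha> v) z"
  moreover obtain u where "u \<in> V" "z = \<alpha> u"
    using B_W[OF calculation] \<alpha> by (auto simp: bij_betw_def)
  ultimately show "\<exists>u. A v u \<and> z = \<alpha> u"
    using adj v by blast
qed (use adj v A_V in blast)

lemma bij_conj_involution:
  assumes \<alpha>: "bij_betw \<alpha> V W"
    and adj: "\<And>p q. p \<in> V \<Longrightarrow> q \<in> V \<Longrightarrow> A p q \<longleftrightarrow> B (\<alpha> p) (\<alpha> q)"
    and A_V: "\<And>p q. A p q \<Longrightarrow> p \<in> V \<and> q \<in> V"
    and \<rho>_W: "\<And>w. w \<in> W \<Longrightarrow> \<rho> w \<in> W"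
    and \<rho>_\<rho>: "\<And>w. w \<in> W \<Longrightarrow> \<rho> (\<rho> w) = w"
    and B_\<rho>: "\<And>w w'. B w w' \<Longrightarrow> B (\<rho> w) (\<rho> w')"
  defines "\<phi> \<equiv> \<lambda>p. inv_into V \<alpha> (\<rho> (\<alpha> p))"
  shows "\<And>p. p \<in> V \<Longrightarrow> \<phi> (\<phi> p) = p"
    and "\<And>p q. A p q \<Longrightarrow> A (\<phi> p) (\<phi> q)"
proof -
  have \<alpha>_V: "\<alpha> p \<in> W" if "p \<in> V" for p
    using \<alpha> that by (auto simp: bij_betw_def)
  have \<phi>_V: "\<phi> p \<in> V" if "p \<in> V" for p
    unfolding \<phi>_def using \<alpha> \<alpha>_V[OF that] \<rho>_W by (metis bij_betw_def inv_into_into)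
  have \<alpha>_\<phi>: "\<alpha> (\<phi> p) = \<rho> (\<alpha> p)" if "p \<in> V" for p
    unfolding \<phi>_def using \<alpha> \<alpha>_V[OF that] \<rho>_W by (simp add: bij_betw_def f_inv_into_f)
  show "\<phi> (\<phi> p) = p" if "p \<in> V" for p
    using \<alpha> that \<alpha>_\<phi>[OF that] \<rho>_\<rho>[OF \<alpha>_V[OF that]] by (simp add: \<phi>_def bij_betw_def)
  show "A (\<phi> p) (\<phi> q)" if "A p q" for p q
    using that A_V[OF that] adj \<phi>_V \<alpha>_\<phi> B_\<rho> by metis
qed

section \<open>The multigraphs \<open>\<Phi>(K, S)\<close>\<close>

lemma Phi_vertices_iff:
  "(i, C) \<in> Phi_vertices K S \<longleftrightarrow> i < length S \<and> C \<in> rcosets\<^bsub>K\<^esub> (generate K {S ! i})"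
  by (simp add: Phi_vertices_def)

lemma Phi_split: "Phi K S = (Phi_vertices K S, fst (snd (Phi K S)), snd (snd (Phi K S)))"
  by (simp add: Phi_def)

lemma mg_adj_Phi_iff:
  "mg_adj (Phi K S) x z \<longleftrightarrow> (\<exists>u w g. u \<in> Phi_vertices K S \<and> w \<in> Phi_vertices K S \<and> fst u < fst w
     \<and> g \<in> snd u \<and> g \<in> snd w \<and> {u, w} = {x, z})"
  unfolding mg_adj_def Phi_def by auto

lemma mg_adj_Phi_vertices: "mg_adj (Phi K S) x z \<Longrightarrow> x \<in> Phi_vertices K S \<and> z \<in> Phi_vertices K S"
  unfolding mg_adj_Phi_iff by (auto simp: doubleton_eq_iff)

definition Phi_rmult :: "('k, 'm) monoid_scheme \<Rightarrow> 'k \<Rightarrow> nat \<times> 'k set \<Rightarrow> nat \<times> 'k set" where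
  "Phi_rmult K k v = (fst v, snd v #>\<^bsub>K\<^esub> k)"

context group
begin

lemma subgroup_generate_nth:
  "set S \<subseteq> carrier G \<Longrightarrow> i < length S \<Longrightarrow> subgroup (generate G {S ! i}) G"
  using nth_mem by (auto intro!: generate_is_subgroup)

lemma mg_adj_PhiI:
  assumes S: "set S \<subseteq> carrier G" and ij: "i < length S" "j < length S" "i \<noteq> j"
    and g: "g \<in> carrier G"
  shows "mg_adj (Phi G S) (i, generate G {S ! i} #> g) (j, generate G {S ! j} #> g)"
proof -
  have "mg_adj (Phi G S) (i, generate G {S ! i} #> g) (j, generate G {S ! j} #> g)"
    if "i < length S" "j < length S" "i < j" for i j
  proof -
    have "(k, generate G {S ! k} #> g) \<in> Phi_vertices G S" "g \<in> generate G {S ! k} #> g"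
      if "k < length S" for k
    proof -
      have U: "subgroup (generate G {S ! k}) G"
        using subgroup_generate_nth[OF S that] .
      show "(k, generate G {S ! k} #> g) \<in> Phi_vertices G S"
        using rcosetsI[OF subgroup.subset[OF U] g] that by (simp add: Phi_vertices_iff)
      show "g \<in> generate G {S ! k} #> g"
        using rcos_self[OF g U] .
    qed
    then show ?thesis
      unfolding mg_adj_Phi_iff using that
      by (intro exI[of _ "(i, generate G {S ! i} #> g)"] exI[of _ "(j, generate G {S ! j} #> g)"]
          exI[of _ g]) simp
  qed
  then show ?thesis
    using ij mg_adj_commute linorder_neqE_nat by meson
qed

lemma Phi_neighbour_iff:
  assumes S: "set S \<subseteq> carrier G" and v: "(i, C) \<in> Phi_vertices G S"
  shows "mg_adj (Phi G S) (i, C) z \<longleftrightarrow>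
    (\<exists>j g. j < length S \<and> j \<noteq> i \<and> g \<in> C \<and> z = (j, generate G {S ! j} #> g))"
proof
  assume "mg_adj (Phi G S) (i, C) z"
  then obtain u w g where uw: "u \<in> Phi_vertices G S" "w \<in> Phi_vertices G S" "fst u < fst w"
      "g \<in> snd u" "g \<in> snd w" "{u, w} = {(i, C), z}"
    unfolding mg_adj_Phi_iff by blast
  obtain j D where z: "z = (j, D)"
    by fastforce
  have j: "j < length S" "D \<in> rcosets generate G {S ! j}" "j \<noteq> i" and g: "g \<in> C" "g \<in> D"
    using uw unfolding z doubleton_eq_iff by (auto simp: Phi_vertices_iff)
  have "D = generate G {S ! j} #> g"
    using rcosets_eq_r_coset[OF subgroup_generate_nth[OF S j(1)] j(2) g(2)] .
  then show "\<exists>j g. j < length S \<and> j \<noteq> i \<and> g \<in> C \<and> z = (j, generate G {S ! j} #> g)"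
    using z j g by blast
next
  assume "\<exists>j g. j < length S \<and> j \<noteq> i \<and> g \<in> C \<and> z = (j, generate G {S ! j} #> g)"
  then obtain j g where j: "j < length S" "j \<noteq> i" and g: "g \<in> C"
    and z: "z = (j, generate G {S ! j} #> g)" by blast
  have i: "i < length S" "C \<in> rcosets generate G {S ! i}"
    using v by (auto simp: Phi_vertices_iff)
  have U: "subgroup (generate G {S ! i}) G"
    using subgroup_generate_nth[OF S i(1)] .
  have C: "C = generate G {S ! i} #> g"
    using rcosets_eq_r_coset[OF U i(2) g] .
  have "g \<in> carrier G"
    using subgroup.rcosets_carrier[OF U is_group i(2)] g by blast
  from mg_adj_PhiI[OF S i(1) j(1) _ this] j(2)
  show "mg_adj (Phi G S) (i, C) z"
    unfolding C z by blast
qed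

lemma Phi_rmult_vertex:
  assumes S: "set S \<subseteq> carrier G" and k: "k \<in> carrier G" and v: "v \<in> Phi_vertices G S"
  shows "Phi_rmult G k v \<in> Phi_vertices G S"
proof -
  obtain i x where v_eq: "v = (i, generate G {S ! i} #> x)" and i: "i < length S"
    and x: "x \<in> carrier G"
    using v by (cases v) (auto simp: Phi_vertices_iff RCOSETS_def)
  have U: "generate G {S ! i} \<subseteq> carrier G"
    using subgroup.subset[OF subgroup_generate_nth[OF S i]] .
  then show ?thesis
    using coset_mult_assoc[OF U x k] rcosetsI[OF U m_closed[OF x k]] i
    by (simp add: v_eq Phi_rmult_def Phi_vertices_iff)
qed

lemma Phi_rmult_involutive:
  assumes S: "set S \<subseteq> carrier G" and k: "k \<in> carrier G" "k \<otimes> k = \<one>"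
    and v: "v \<in> Phi_vertices G S"
  shows "Phi_rmult G k (Phi_rmult G k v) = v"
proof -
  obtain i C where v_eq: "v = (i, C)" and i: "i < length S" "C \<in> rcosets generate G {S ! i}"
    using v by (cases v) (auto simp: Phi_vertices_iff)
  have "C \<subseteq> carrier G"
    using subgroup.rcosets_carrier[OF subgroup_generate_nth[OF S i(1)] is_group i(2)] .
  then show ?thesis
    using coset_mult_assoc[OF _ k(1) k(1)] k by (simp add: v_eq Phi_rmult_def)
qed

lemma Phi_rmult_adj:
  assumes S: "set S \<subseteq> carrier G" and k: "k \<in> carrier G" and adj: "mg_adj (Phi G S) x z"
  shows "mg_adj (Phi G S) (Phi_rmult G k x) (Phi_rmult G k z)"
proof -
  obtain u w g where uw: "u \<in> Phi_vertices G S" "w \<in> Phi_vertices G S" "fst u < fst w"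
      "g \<in> snd u" "g \<in> snd w" "{u, w} = {x, z}"
    using adj unfolding mg_adj_Phi_iff by blast
  have "g \<otimes> k \<in> snd u #> k" "g \<otimes> k \<in> snd w #> k"
    using uw(4,5) by (auto simp: r_coset_def)
  moreover have "{Phi_rmult G k u, Phi_rmult G k w} = {Phi_rmult G k x, Phi_rmult G k z}"
    using uw(6) by (auto simp: doubleton_eq_iff)
  ultimately show ?thesis
    unfolding mg_adj_Phi_iff using Phi_rmult_vertex[OF S k uw(1)] Phi_rmult_vertex[OF S k uw(2)] uw(3)
    by (intro exI[of _ "Phi_rmult G k u"] exI[of _ "Phi_rmult G k w"] exI[of _ "g \<otimes> k"])
       (simp add: Phi_rmult_def)
qed

lemma Phi_simple_neighbour_inj:
  assumes simple: "inj_on (snd (snd (Phi G S))) (fst (snd (Phi G S)))"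
    and S: "set S \<subseteq> carrier G" and v: "(i, C) \<in> Phi_vertices G S"
    and j: "j < length S" "j \<noteq> i" and g: "g \<in> C" "g' \<in> C"
    and eq: "generate G {S ! j} #> g = generate G {S ! j} #> g'"
  shows "g = g'"
proof -
  define edge where "edge h = (if i < j then ((i, C), (j, generate G {S ! j} #> h), h)
    else ((j, generate G {S ! j} #> h), (i, C), h))" for h
  have "edge h \<in> fst (snd (Phi G S))" if "h \<in> C" for h
  proof -
    have U: "subgroup (generate G {S ! j}) G"
      using subgroup_generate_nth[OF S j(1)] .
    have "h \<in> carrier G"
      using v that subgroup.rcosets_carrier[OF subgroup_generate_nth[OF S] is_group]
      by (auto simp: Phi_vertices_iff)
    then have "(j, generate G {S ! j} #> h) \<in> Phi_vertices G S" "h \<in> generate G {S ! j} #> h"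
      using rcosetsI[OF subgroup.subset[OF U]] rcos_self[OF _ U] j by (auto simp: Phi_vertices_iff)
    then show ?thesis
      using v that j(2) by (auto simp: edge_def Phi_def)
  qed
  moreover have "snd (snd (Phi G S)) (edge g) = snd (snd (Phi G S)) (edge g')"
    using eq by (auto simp: edge_def Phi_def insert_commute)
  ultimately have "edge g = edge g'"
    using simple g by (auto dest: inj_onD)
  then show ?thesis
    by (auto simp: edge_def split: if_splits)
qed

lemma Phi_two_neighbours_common_index:
  assumes S: "set S \<subseteq> carrier G" and v: "(i, C) \<in> Phi_vertices G S"
    and nb: "\<And>z. mg_adj (Phi G S) (i, C) z \<longleftrightarrow> z = p \<or> z = q"
    and not_adj: "\<not> mg_adj (Phi G S) p q"
  obtains j where "j < length S" "j \<noteq> i"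
    and "\<And>z. z = p \<or> z = q \<longleftrightarrow> (\<exists>g\<in>C. z = (j, generate G {S ! j} #> g))"
proof -
  define U where "U j = generate G {S ! j}" for j
  have nb_iff: "z = p \<or> z = q \<longleftrightarrow> (\<exists>j g. j < length S \<and> j \<noteq> i \<and> g \<in> C \<and> z = (j, U j #> g))"
    for z
    using nb[of z] Phi_neighbour_iff[OF S v, of z] by (simp add: U_def)
  obtain j g1 where j: "j < length S" "j \<noteq> i" and g1: "g1 \<in> C" and p_eq: "p = (j, U j #> g1)"
    using nb_iff[of p] by blast
  have "j' = j" if j': "j' < length S" "j' \<noteq> i" and g: "g \<in> C" and z: "z = (j', U j' #> g)"
    for j' g z
  proof (rule ccontr)
    assume j'_j: "j' \<noteq> j"
    have "(j', U j' #> g1) = p \<or> (j', U j' #> g1) = q"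
      using nb_iff j' g1 by blast
    then have "(j', U j' #> g1) = q"
      using p_eq j'_j by auto
    moreover have "g1 \<in> carrier G"
      using subgroup.rcosets_carrier[OF subgroup_generate_nth[OF S] is_group] v g1
      by (auto simp: Phi_vertices_iff)
    then have "mg_adj (Phi G S) (j, U j #> g1) (j', U j' #> g1)"
      using mg_adj_PhiI[OF S j(1) j'(1)] j'_j by (simp add: U_def)
    ultimately show False
      using not_adj p_eq by simp
  qed
  then have "z = p \<or> z = q \<longleftrightarrow> (\<exists>g\<in>C. z = (j, U j #> g))" for z
    using nb_iff[of z] j by blast
  then show thesis
    using that j by (simp add: U_def)
qed

lemma Phi_rmult_neighbour:
  assumes simple: "inj_on (snd (snd (Phi G S))) (fst (snd (Phi G S)))"
    and S: "set S \<subseteq> carrier G" and v: "(i, C) \<in> Phi_vertices G S"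
    and j: "j < length S" "j \<noteq> i" and k: "k \<in> carrier G" "C #> k = C" and g: "g \<in> C"
  shows "g \<otimes> k \<in> C"
    and "Phi_rmult G k (j, generate G {S ! j} #> g) = (j, generate G {S ! j} #> (g \<otimes> k))"
    and "k \<noteq> \<one> \<Longrightarrow> generate G {S ! j} #> (g \<otimes> k) \<noteq> generate G {S ! j} #> g"
proof -
  show gk: "g \<otimes> k \<in> C"
    using g k(2) by (auto simp: r_coset_def)
  have "g \<in> carrier G"
    using subgroup.rcosets_carrier[OF subgroup_generate_nth[OF S] is_group] v g
    by (auto simp: Phi_vertices_iff)
  then show "Phi_rmult G k (j, generate G {S ! j} #> g) = (j, generate G {S ! j} #> (g \<otimes> k))"
    using coset_mult_assoc[OF subgroup.subset[OF subgroup_generate_nth[OF S j(1)]] _ k(1)]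
    by (simp add: Phi_rmult_def)
  show "generate G {S ! j} #> (g \<otimes> k) \<noteq> generate G {S ! j} #> g" if "k \<noteq> \<one>"
    using Phi_simple_neighbour_inj[OF simple S v j gk g] that k(1) \<open>g \<in> carrier G\<close> by auto
qed

lemma Phi_two_neighbours_swap:
  assumes S: "set S \<subseteq> carrier G"
    and simple: "inj_on (snd (snd (Phi G S))) (fst (snd (Phi G S)))"
    and v0: "v0 \<in> Phi_vertices G S"
    and nb: "\<And>z. mg_adj (Phi G S) v0 z \<longleftrightarrow> z = p \<or> z = q"
    and pq: "p \<noteq> q" and not_adj: "\<not> mg_adj (Phi G S) p q"
  obtains k where "k \<in> carrier G" "k \<otimes> k = \<one>" "Phi_rmult G k v0 = v0" "Phi_rmult G k p = q"
proof -
  obtain i C where v0_eq: "v0 = (i, C)"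
    by fastforce
  have i: "i < length S" "C \<in> rcosets generate G {S ! i}"
    using v0 by (auto simp: v0_eq Phi_vertices_iff)
  have Ui: "subgroup (generate G {S ! i}) G"
    using subgroup_generate_nth[OF S i(1)] .
  obtain j where j: "j < length S" "j \<noteq> i"
    and nb_iff: "\<And>z. z = p \<or> z = q \<longleftrightarrow> (\<exists>g\<in>C. z = (j, generate G {S ! j} #> g))"
    using Phi_two_neighbours_common_index[OF S v0[unfolded v0_eq] nb[unfolded v0_eq] not_adj] by blast
  obtain y where y: "y \<in> carrier G" "C = generate G {S ! i} #> y"
    using i(2) by (auto simp: RCOSETS_def)
  obtain k where k: "k \<in> carrier G" "C #> k = C" and k_one: "k = \<one> \<Longrightarrow> C = {y}"
    using r_coset_generate_conj_stable[OF _ y(1)] S nth_mem[OF i(1)] y(2) by blast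
  note rmult = Phi_rmult_neighbour[OF simple S v0[unfolded v0_eq] j k]
  have "k \<noteq> \<one>"
    using k_one nb_iff[of p] nb_iff[of q] pq by auto
  have swap: "Phi_rmult G k x \<noteq> x \<and> (Phi_rmult G k x = p \<or> Phi_rmult G k x = q)"
    if "x = p \<or> x = q" for x
    using that rmult \<open>k \<noteq> \<one>\<close> nb_iff by (metis (no_types, lifting) prod.inject)
  have rmult_p: "Phi_rmult G k p = q" and "Phi_rmult G k q = p"
    using swap[of p] swap[of q] pq by blast+
  moreover obtain g1 where g1: "g1 \<in> C" "p = (j, generate G {S ! j} #> g1)"
    using nb_iff[of p] by blast
  ultimately have "generate G {S ! j} #> (g1 \<otimes> k \<otimes> k) = generate G {S ! j} #> g1"
    using rmult(1,2)[OF g1(1)] rmult(2)[OF rmult(1)[OF g1(1)]] by simp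
  then have "g1 \<otimes> k \<otimes> k = g1"
    using Phi_simple_neighbour_inj[OF simple S v0[unfolded v0_eq] j] rmult(1) g1(1) by blast
  moreover have "g1 \<in> carrier G"
    using subgroup.rcosets_carrier[OF Ui is_group i(2)] g1(1) by blast
  ultimately have "k \<otimes> k = \<one>"
    using k(1) by (simp add: m_assoc)
  moreover have "Phi_rmult G k v0 = v0"
    using k(2) by (simp add: v0_eq Phi_rmult_def)
  ultimately show thesis
    using that k(1) rmult_p by blast
qed

lemma Phi_pair_vertices_iff:
  "(i, C) \<in> Phi_vertices G [a, b] \<longleftrightarrow>
     i = 0 \<and> C \<in> rcosets generate G {a} \<or> i = 1 \<and> C \<in> rcosets generate G {b}"
  unfolding Phi_vertices_def by (auto simp: less_Suc_eq)

lemma Phi_pair_edges: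
  assumes a: "a \<in> carrier G" and b: "b \<in> carrier G"
  shows "fst (snd (Phi G [a, b])) =
    (\<lambda>g. ((0, generate G {a} #> g), (1, generate G {b} #> g), g)) ` carrier G"
proof -
  have A: "subgroup (generate G {a}) G" and B: "subgroup (generate G {b}) G"
    using a b by (simp_all add: generate_is_subgroup)
  have "x \<in> (\<lambda>g. ((0, generate G {a} #> g), (1, generate G {b} #> g), g)) ` carrier G"
    if x_edge: "x \<in> fst (snd (Phi G [a, b]))" for x
  proof -
    obtain i C j D g where x: "x = ((i, C), (j, D), g)" and ij: "i < j"
      and v: "(i, C) \<in> Phi_vertices G [a, b]" "(j, D) \<in> Phi_vertices G [a, b]"
      and g: "g \<in> C" "g \<in> D"
      using x_edge by (auto simp: Phi_def)
    then have x: "x = ((0, C), (1, D), g)" and C: "C \<in> rcosets generate G {a}"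
      and D: "D \<in> rcosets generate G {b}"
      by (auto simp: Phi_pair_vertices_iff)
    have "C = generate G {a} #> g" "D = generate G {b} #> g"
      using rcosets_eq_r_coset[OF A C g(1)] rcosets_eq_r_coset[OF B D g(2)] .
    moreover have "g \<in> carrier G"
      using subgroup.rcosets_carrier[OF A is_group C] g(1) by blast
    ultimately show ?thesis
      using x by blast
  qed
  moreover have "((0, generate G {a} #> g), (1, generate G {b} #> g), g) \<in> fst (snd (Phi G [a, b]))"
    if "g \<in> carrier G" for g
    using that rcosetsI[OF subgroup.subset] rcos_self A B
    by (auto simp: Phi_def Phi_pair_vertices_iff)
  ultimately show ?thesis
    by blast
qed

lemma Phi_pair_vertices_bij:
  assumes a: "a \<in> carrier G" and b: "b \<in> carrier G"
    and \<beta>: "bij_betw \<beta> E (carrier G)"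
    and P_Q: "\<And>e e'. e \<in> E \<Longrightarrow> e' \<in> E \<Longrightarrow> P e \<noteq> Q e'"
    and P: "\<And>e e'. e \<in> E \<Longrightarrow> e' \<in> E \<Longrightarrow>
      P e = P e' \<longleftrightarrow> generate G {a} #> \<beta> e = generate G {a} #> \<beta> e'"
    and Q: "\<And>e e'. e \<in> E \<Longrightarrow> e' \<in> E \<Longrightarrow>
      Q e = Q e' \<longleftrightarrow> generate G {b} #> \<beta> e = generate G {b} #> \<beta> e'"
  obtains \<alpha> where "bij_betw \<alpha> (P ` E \<union> Q ` E) (Phi_vertices G [a, b])"
    and "\<And>e. e \<in> E \<Longrightarrow> \<alpha> (P e) = (0, generate G {a} #> \<beta> e)"
    and "\<And>e. e \<in> E \<Longrightarrow> \<alpha> (Q e) = (1, generate G {b} #> \<beta> e)"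
proof -
  define A where "A = generate G {a}"
  define B where "B = generate G {b}"
  define \<alpha> where "\<alpha> v = (if v \<in> P ` E then (0::nat, A #> \<beta> (inv_into E P v))
    else (1::nat, B #> \<beta> (inv_into E Q v)))" for v
  have \<alpha>_P: "\<alpha> (P e) = (0, A #> \<beta> e)" if e: "e \<in> E" for e
  proof -
    have "inv_into E P (P e) \<in> E" "P (inv_into E P (P e)) = P e"
      using e by (simp_all add: inv_into_into f_inv_into_f)
    then show ?thesis
      using P[of "inv_into E P (P e)" e] e by (simp add: \<alpha>_def A_def)
  qed
  have \<alpha>_Q: "\<alpha> (Q e) = (1, B #> \<beta> e)" if e: "e \<in> E" for e
  proof -
    have "inv_into E Q (Q e) \<in> E" "Q (inv_into E Q (Q e)) = Q e" "Q e \<notin> P ` E"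
      using e P_Q by (fastforce simp: inv_into_into f_inv_into_f)+
    then show ?thesis
      using Q[of "inv_into E Q (Q e)" e] e by (simp add: \<alpha>_def B_def)
  qed
  have "inj_on \<alpha> (P ` E \<union> Q ` E)"
    using \<alpha>_P \<alpha>_Q P Q by (auto simp: inj_on_def A_def B_def)
  moreover have "\<alpha> ` (P ` E \<union> Q ` E) = Phi_vertices G [a, b]"
  proof
    have "generate G {a} \<subseteq> carrier G" "generate G {b} \<subseteq> carrier G" "\<beta> ` E \<subseteq> carrier G"
      using \<beta> generate_incl a b by (auto simp: bij_betw_def)
    then show "\<alpha> ` (P ` E \<union> Q ` E) \<subseteq> Phi_vertices G [a, b]"
      using \<alpha>_P \<alpha>_Q by (auto simp: Phi_pair_vertices_iff A_def B_def intro!: rcosetsI)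
    show "Phi_vertices G [a, b] \<subseteq> \<alpha> ` (P ` E \<union> Q ` E)"
    proof
      fix v
      assume "v \<in> Phi_vertices G [a, b]"
      then obtain g where g: "g \<in> carrier G" and v: "v = (0, A #> g) \<or> v = (1, B #> g)"
        by (cases v) (auto simp: Phi_pair_vertices_iff RCOSETS_def A_def B_def)
      obtain e where "e \<in> E" "\<beta> e = g"
        using \<beta> g by (metis bij_betw_imp_surj_on imageE)
      then have "(0, A #> g) = \<alpha> (P e)" "(1, B #> g) = \<alpha> (Q e)"
        using \<alpha>_P \<alpha>_Q by simp_all
      then show "v \<in> \<alpha> ` (P ` E \<union> Q ` E)"
        using v \<open>e \<in> E\<close> by blast
    qed
  qed
  ultimately show thesis
    using that \<alpha>_P \<alpha>_Q by (simp add: bij_betw_def A_def B_def)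
qed

lemma mg_iso_Phi_pairI:
  assumes a: "a \<in> carrier G" and b: "b \<in> carrier G"
    and \<beta>: "bij_betw \<beta> E (carrier G)"
    and ends: "\<And>e. e \<in> E \<Longrightarrow> \<psi> e = {P e, Q e}"
    and V: "V = P ` E \<union> Q ` E"
    and P_Q: "\<And>e e'. e \<in> E \<Longrightarrow> e' \<in> E \<Longrightarrow> P e \<noteq> Q e'"
    and P: "\<And>e e'. e \<in> E \<Longrightarrow> e' \<in> E \<Longrightarrow>
      P e = P e' \<longleftrightarrow> generate G {a} #> \<beta> e = generate G {a} #> \<beta> e'"
    and Q: "\<And>e e'. e \<in> E \<Longrightarrow> e' \<in> E \<Longrightarrow>
      Q e = Q e' \<longleftrightarrow> generate G {b} #> \<beta> e = generate G {b} #> \<beta> e'"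
  shows "mg_iso (V, E, \<psi>) (Phi G [a, b])"
proof -
  define A where "A = generate G {a}"
  define B where "B = generate G {b}"
  obtain \<alpha> where "bij_betw \<alpha> V (fst (Phi G [a, b]))"
    and \<alpha>_P: "\<And>e. e \<in> E \<Longrightarrow> \<alpha> (P e) = (0, A #> \<beta> e)"
    and \<alpha>_Q: "\<And>e. e \<in> E \<Longrightarrow> \<alpha> (Q e) = (1, B #> \<beta> e)"
    using Phi_pair_vertices_bij[OF a b \<beta> P_Q P Q] unfolding V A_def B_def by (metis Phi_split fst_conv)
  moreover have "bij_betw (\<lambda>g. ((0, A #> g), (1, B #> g), g)) (carrier G) (fst (snd (Phi G [a, b])))"
    unfolding Phi_pair_edges[OF a b] A_def B_def by (auto simp: bij_betw_def inj_on_def)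
  then have "bij_betw (\<lambda>e. ((0, A #> \<beta> e), (1, B #> \<beta> e), \<beta> e)) E (fst (snd (Phi G [a, b])))"
    using bij_betw_trans[OF \<beta>] by (simp add: comp_def)
  moreover have "snd (snd (Phi G [a, b])) ((0, A #> \<beta> e), (1, B #> \<beta> e), \<beta> e) = \<alpha> ` \<psi> e"
    if "e \<in> E" for e
    using that \<alpha>_P \<alpha>_Q ends by (simp add: Phi_def)
  ultimately show ?thesis
    using mg_isoI[of \<alpha> V "fst (Phi G [a, b])" _ E "fst (snd (Phi G [a, b]))" "snd (snd (Phi G [a, b]))" \<psi>]
    by simp
qed

end

section \<open>The incidence graph of \<open>\<Phi>(G, [s, t])\<close>\<close>

locale two_generated = group G for G (structure) +
  fixes s t
  assumes s_closed: "s \<in> carrier G" and t_closed: "t \<in> carrier G"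
begin

abbreviation Hst :: "'a set" where
  "Hst \<equiv> generate G {s, t}"

text \<open>The two kinds of vertices of \<open>\<Phi>(G, [s, t])\<close> are indexed by \<open>False\<close> (cosets of \<open>\<langle>s\<rangle>\<close>)
  and \<open>True\<close> (cosets of \<open>\<langle>t\<rangle>\<close>).\<close>

definition side_group :: "bool \<Rightarrow> 'a set" where
  "side_group b = generate G {if b then t else s}"

definition coset_vertex :: "bool \<Rightarrow> 'a \<Rightarrow> nat \<times> 'a set" where
  "coset_vertex b g = (of_bool b, side_group b #> g)"

definition Phi_edge :: "'a \<Rightarrow> (nat \<times> 'a set) \<times> (nat \<times> 'a set) \<times> 'a" where
  "Phi_edge g = (coset_vertex False g, coset_vertex True g, g)"

lemma subgroup_Hst: "subgroup Hst G"
  using s_closed t_closed by (simp add: generate_is_subgroup)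

lemma Hst_subset: "Hst \<subseteq> carrier G"
  using subgroup.subset[OF subgroup_Hst] .

lemma subgroup_side_group: "subgroup (side_group b) G"
  using s_closed t_closed by (simp add: side_group_def generate_is_subgroup)

lemma side_group_subset_Hst: "side_group b \<subseteq> Hst"
  by (simp add: side_group_def mono_generate)

lemma generator_in_side_group: "(if b then t else s) \<in> side_group b"
  by (simp add: side_group_def generate.incl)

lemma Phi_edge_eq_iff [simp]: "Phi_edge g = Phi_edge g' \<longleftrightarrow> g = g'"
  by (auto simp: Phi_edge_def)

lemma coset_vertex_eq_iff:
  "coset_vertex b g = coset_vertex b' g' \<longleftrightarrow> b = b' \<and> side_group b #> g = side_group b #> g'"
  by (auto simp: coset_vertex_def)

lemma Phi_vertices_iff_coset_vertex:
  "v \<in> Phi_vertices G [s, t] \<longleftrightarrow> (\<exists>b. \<exists>g\<in>carrier G. v = coset_vertex b g)"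
  by (cases v) (auto simp: Phi_pair_vertices_iff coset_vertex_def side_group_def RCOSETS_def ex_bool_eq)

lemma Phi_eq_edge_image: "Phi G [s, t] = (Phi_vertices G [s, t], Phi_edge ` carrier G, snd (snd (Phi G [s, t])))"
  using Phi_pair_edges[OF s_closed t_closed]
  by (simp add: prod_eq_iff Phi_def Phi_edge_def coset_vertex_def side_group_def)

lemma Phi_ends_edge: "snd (snd (Phi G [s, t])) (Phi_edge g) = {coset_vertex False g, coset_vertex True g}"
  by (simp add: Phi_def Phi_edge_def)

definition inc_V :: "(nat \<times> 'a set + (nat \<times> 'a set) \<times> (nat \<times> 'a set) \<times> 'a) set" where
  "inc_V = Phi_vertices G [s, t] <+> Phi_edge ` carrier G"

definition inc_E :: "((nat \<times> 'a set) \<times> (nat \<times> 'a set) \<times> (nat \<times> 'a set) \<times> 'a) set" where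
  "inc_E = {(coset_vertex b g, Phi_edge g) |b g. g \<in> carrier G}"

definition inc_ends :: "(nat \<times> 'a set) \<times> (nat \<times> 'a set) \<times> (nat \<times> 'a set) \<times> 'a
    \<Rightarrow> (nat \<times> 'a set + (nat \<times> 'a set) \<times> (nat \<times> 'a set) \<times> 'a) set" where
  "inc_ends = (\<lambda>(v, a). {Inl v, Inr a})"

abbreviation inc where
  "inc \<equiv> (inc_V, inc_E, inc_ends)"

lemma inc_E_iff: "e \<in> inc_E \<longleftrightarrow> (\<exists>b. \<exists>g\<in>carrier G. e = (coset_vertex b g, Phi_edge g))"
  by (auto simp: inc_E_def)

lemma inc_ends_apply [simp]: "inc_ends (v, a) = {Inl v, Inr a}"
  by (simp add: inc_ends_def)

lemma incidence_Phi_eq: "incidence (Phi G [s, t]) = inc"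
proof -
  have "{(v, a). a \<in> Phi_edge ` carrier G \<and> v \<in> snd (snd (Phi G [s, t])) a} = inc_E"
    unfolding set_eq_iff inc_E_iff by (auto simp: Phi_ends_edge ex_bool_eq)
  then show ?thesis
    by (subst Phi_eq_edge_image) (simp add: incidence_def inc_V_def inc_ends_def)
qed

lemma inc_V_iff:
  "x \<in> inc_V \<longleftrightarrow>
    (\<exists>b. \<exists>g\<in>carrier G. x = Inl (coset_vertex b g)) \<or> (\<exists>g\<in>carrier G. x = Inr (Phi_edge g))"
proof -
  have "x \<in> Inl ` Phi_vertices G [s, t] \<longleftrightarrow> (\<exists>b. \<exists>g\<in>carrier G. x = Inl (coset_vertex b g))"
    using Phi_vertices_iff_coset_vertex by blast
  then show ?thesis
    by (auto simp: inc_V_def Plus_def)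
qed

lemma Inl_coset_vertex_in_inc_V: "g \<in> carrier G \<Longrightarrow> Inl (coset_vertex b g) \<in> inc_V"
  by (auto simp: inc_V_iff)

lemma Inr_Phi_edge_in_inc_V: "g \<in> carrier G \<Longrightarrow> Inr (Phi_edge g) \<in> inc_V"
  by (auto simp: inc_V_iff)

lemma inc_V_eq_ends: "inc_V = (\<lambda>e. Inl (fst e)) ` inc_E \<union> (\<lambda>e. Inr (snd e)) ` inc_E"
proof (intro equalityI subsetI)
  fix x
  assume "x \<in> inc_V"
  then consider b g where "g \<in> carrier G" "x = Inl (coset_vertex b g)"
    | g where "g \<in> carrier G" "x = Inr (Phi_edge g)"
    unfolding inc_V_iff by blast
  then show "x \<in> (\<lambda>e. Inl (fst e)) ` inc_E \<union> (\<lambda>e. Inr (snd e)) ` inc_E"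
  proof cases
    case (1 b g)
    then show ?thesis
      by (intro UnI1 image_eqI[of _ _ "(coset_vertex b g, Phi_edge g)"]) (auto simp: inc_E_def)
  next
    case (2 g)
    then show ?thesis
      by (intro UnI2 image_eqI[of _ _ "(coset_vertex False g, Phi_edge g)"]) (auto simp: inc_E_def)
  qed
next
  fix x
  assume "x \<in> (\<lambda>e. Inl (fst e)) ` inc_E \<union> (\<lambda>e. Inr (snd e)) ` inc_E"
  then obtain e where e: "e \<in> inc_E" "x = Inl (fst e) \<or> x = Inr (snd e)"
    by blast
  then obtain b g where "g \<in> carrier G" "e = (coset_vertex b g, Phi_edge g)"
    unfolding inc_E_iff by blast
  then have "Inl (fst e) \<in> inc_V" "Inr (snd e) \<in> inc_V"
    using Inl_coset_vertex_in_inc_V Inr_Phi_edge_in_inc_V by simp_all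
  then show "x \<in> inc_V"
    using e(2) by blast
qed

lemma inc_adj_iff:
  "mg_adj inc x z \<longleftrightarrow> (\<exists>b. \<exists>g\<in>carrier G. {Inl (coset_vertex b g), Inr (Phi_edge g)} = {x, z})"
proof -
  have "mg_adj inc x z \<longleftrightarrow> (\<exists>e\<in>inc_E. inc_ends e = {x, z})"
    by (simp add: mg_adj_def)
  also have "\<dots> \<longleftrightarrow> (\<exists>b. \<exists>g\<in>carrier G. inc_ends (coset_vertex b g, Phi_edge g) = {x, z})"
  proof
    assume "\<exists>e\<in>inc_E. inc_ends e = {x, z}"
    then obtain e where e: "e \<in> inc_E" "inc_ends e = {x, z}"
      by blast
    then obtain b g where "g \<in> carrier G" "e = (coset_vertex b g, Phi_edge g)"
      unfolding inc_E_iff by blast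
    then show "\<exists>b. \<exists>g\<in>carrier G. inc_ends (coset_vertex b g, Phi_edge g) = {x, z}"
      using e(2) by (intro exI[of _ b] bexI[of _ g]) simp_all
  next
    assume "\<exists>b. \<exists>g\<in>carrier G. inc_ends (coset_vertex b g, Phi_edge g) = {x, z}"
    then obtain b g where g: "g \<in> carrier G" and ends: "inc_ends (coset_vertex b g, Phi_edge g) = {x, z}"
      by blast
    show "\<exists>e\<in>inc_E. inc_ends e = {x, z}"
      using ends g by (intro bexI[of _ "(coset_vertex b g, Phi_edge g)"]) (auto simp: inc_E_def)
  qed
  finally show ?thesis
    by simp
qed

lemma inc_adj_edge_iff:
  "g \<in> carrier G \<Longrightarrow> mg_adj inc (Inr (Phi_edge g)) z \<longleftrightarrow> (\<exists>b. z = Inl (coset_vertex b g))"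
  unfolding inc_adj_iff by (auto simp: doubleton_eq_iff)

lemma inc_adj_vertexE:
  assumes "mg_adj inc (Inl v) z"
  obtains b g where "g \<in> carrier G" "v = coset_vertex b g" "z = Inr (Phi_edge g)"
  using assms unfolding inc_adj_iff by (auto simp: doubleton_eq_iff)

lemma inc_not_adj_vertices: "\<not> mg_adj inc (Inl v) (Inl w)"
  unfolding inc_adj_iff by (auto simp: doubleton_eq_iff)

lemma inc_ends_subset: "\<forall>e\<in>inc_E. inc_ends e \<subseteq> inc_V"
  unfolding Ball_def inc_E_iff by (auto simp: Inl_coset_vertex_in_inc_V Inr_Phi_edge_in_inc_V)

lemma inj_on_inc_ends: "inj_on inc_ends inc_E"
  by (auto simp: inj_on_def inc_E_iff doubleton_eq_iff)

lemma inc_adj_in_V: "mg_adj inc x z \<Longrightarrow> x \<in> inc_V \<and> z \<in> inc_V"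
  unfolding inc_adj_iff
  by (auto simp: doubleton_eq_iff Inl_coset_vertex_in_inc_V Inr_Phi_edge_in_inc_V)

end

section \<open>From a \<open>G\<close>-graph structure on \<open>I\<Gamma>\<close> to the map \<open>f\<close>\<close>

definition swap_map :: "('a, 'b) monoid_scheme \<Rightarrow> 'a \<Rightarrow> 'a \<Rightarrow> ('a \<Rightarrow> 'a) \<Rightarrow> bool" where
  "swap_map G s t f \<longleftrightarrow> f \<in> generate G {s, t} \<rightarrow> generate G {s, t}
     \<and> (\<forall>x\<in>generate G {s, t}. f (f x) = x)
     \<and> f \<one>\<^bsub>G\<^esub> = \<one>\<^bsub>G\<^esub>
     \<and> (\<forall>x\<in>generate G {s, t}. \<exists>(m::int) (n::int).
           f (s \<otimes>\<^bsub>G\<^esub> x) = t [^]\<^bsub>G\<^esub> m \<otimes>\<^bsub>G\<^esub> f x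
         \<and> f (t \<otimes>\<^bsub>G\<^esub> x) = s [^]\<^bsub>G\<^esub> n \<otimes>\<^bsub>G\<^esub> f x)"

locale incidence_involution = two_generated +
  fixes \<phi>
  assumes \<phi>_involutive: "x \<in> inc_V \<Longrightarrow> \<phi> (\<phi> x) = x"
    and \<phi>_adj: "mg_adj inc x z \<Longrightarrow> mg_adj inc (\<phi> x) (\<phi> z)"
    and \<phi>_edge_one: "\<phi> (Inr (Phi_edge \<one>)) = Inr (Phi_edge \<one>)"
    and \<phi>_swap_one: "\<phi> (Inl (coset_vertex False \<one>)) = Inl (coset_vertex True \<one>)"
begin

text \<open>The \<open>Inl\<close> branch is junk: on \<open>\<langle>s, t\<rangle>\<close>, \<open>\<phi>\<close> maps edges to edges.\<close>

definition edge_map :: "'a \<Rightarrow> 'a" where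
  "edge_map g = (case \<phi> (Inr (Phi_edge g)) of Inr (_, _, h) \<Rightarrow> h | Inl _ \<Rightarrow> \<one>)"

lemma edge_map_eq: "\<phi> (Inr (Phi_edge g)) = Inr (Phi_edge h) \<Longrightarrow> edge_map g = h"
  by (simp add: edge_map_def Phi_edge_def)

text \<open>The invariant propagated from the edge \<open>\<one>\<close> to the edges sharing an end-point.\<close>

definition swaps_star :: "'a \<Rightarrow> bool" where
  "swaps_star g \<longleftrightarrow> edge_map g \<in> Hst \<and> \<phi> (Inr (Phi_edge g)) = Inr (Phi_edge (edge_map g))
     \<and> (\<forall>b. \<phi> (Inl (coset_vertex b g)) = Inl (coset_vertex (\<not> b) (edge_map g)))"

lemma swaps_star_one: "swaps_star \<one>"
proof -
  have "\<phi> (Inl (coset_vertex True \<one>)) = Inl (coset_vertex False \<one>)"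
    using \<phi>_involutive[OF Inl_coset_vertex_in_inc_V[OF one_closed]] \<phi>_swap_one by metis
  then show ?thesis
    using edge_map_eq[OF \<phi>_edge_one] \<phi>_edge_one \<phi>_swap_one subgroup.one_closed[OF subgroup_Hst]
    by (simp add: swaps_star_def all_bool_eq)
qed

lemma swaps_star_same_side_edge:
  assumes g': "g' \<in> carrier G"
    and same: "side_group b #> g' = side_group b #> g" and star: "swaps_star g"
  obtains h where "h \<in> Hst" "\<phi> (Inr (Phi_edge g')) = Inr (Phi_edge h)"
    and "\<phi> (Inl (coset_vertex b g')) = Inl (coset_vertex (\<not> b) h)"
proof -
  define h0 where "h0 = edge_map g"
  have h0: "h0 \<in> Hst" "h0 \<in> carrier G"
    using star Hst_subset by (auto simp: swaps_star_def h0_def)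
  have vertex: "coset_vertex b g' = coset_vertex b g"
    using same by (simp add: coset_vertex_eq_iff)
  have "mg_adj inc (\<phi> (Inr (Phi_edge g'))) (\<phi> (Inl (coset_vertex b g')))"
    using \<phi>_adj inc_adj_edge_iff[OF g'] by blast
  then have "mg_adj inc (Inl (coset_vertex (\<not> b) h0)) (\<phi> (Inr (Phi_edge g')))"
    using star vertex mg_adj_commute by (simp add: swaps_star_def h0_def)
  then obtain c h where h: "h \<in> carrier G" "coset_vertex (\<not> b) h0 = coset_vertex c h"
    and edge: "\<phi> (Inr (Phi_edge g')) = Inr (Phi_edge h)"
    by (rule inc_adj_vertexE)
  have h_coset: "side_group (\<not> b) #> h0 = side_group (\<not> b) #> h" and "c = (\<not> b)"
    using h(2) by (auto simp: coset_vertex_eq_iff)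
  have "h \<in> side_group (\<not> b) #> h0"
    using h_coset r_coset_eq_iff_mem[OF subgroup_side_group h0(2) h(1)] by blast
  then have "h \<in> Hst"
    using h0(1) side_group_subset_Hst subgroup.m_closed[OF subgroup_Hst] by (auto simp: r_coset_def)
  moreover have "\<phi> (Inl (coset_vertex b g')) = Inl (coset_vertex (\<not> b) h)"
    using star vertex h(2) \<open>c = (\<not> b)\<close> by (simp add: swaps_star_def h0_def)
  ultimately show thesis
    using that edge by blast
qed

lemma swaps_star_same_side:
  assumes g': "g' \<in> carrier G"
    and same: "side_group b #> g' = side_group b #> g" and star: "swaps_star g"
  shows "swaps_star g'"
proof -
  obtain h where h: "h \<in> Hst" and edge: "\<phi> (Inr (Phi_edge g')) = Inr (Phi_edge h)"
    and same_b: "\<phi> (Inl (coset_vertex b g')) = Inl (coset_vertex (\<not> b) h)"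
    using swaps_star_same_side_edge[OF g' same star] .
  have "mg_adj inc (\<phi> (Inr (Phi_edge g'))) (\<phi> (Inl (coset_vertex (\<not> b) g')))"
    using \<phi>_adj inc_adj_edge_iff[OF g'] by blast
  then obtain c' where c': "\<phi> (Inl (coset_vertex (\<not> b) g')) = Inl (coset_vertex c' h)"
    using inc_adj_edge_iff[OF subsetD[OF Hst_subset h]] edge by auto
  have "c' \<noteq> (\<not> b)"
  proof
    assume "c' = (\<not> b)"
    then have "\<phi> (\<phi> (Inl (coset_vertex (\<not> b) g'))) = \<phi> (\<phi> (Inl (coset_vertex b g')))"
      using c' same_b by simp
    then show False
      using \<phi>_involutive[OF Inl_coset_vertex_in_inc_V[OF g', of b]]
        \<phi>_involutive[OF Inl_coset_vertex_in_inc_V[OF g', of "\<not> b"]]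
      by (simp add: coset_vertex_eq_iff)
  qed
  then have "\<phi> (Inl (coset_vertex c g')) = Inl (coset_vertex (\<not> c) h)" for c
    using same_b c' by (cases "c = b") auto
  then show ?thesis
    using h edge edge_map_eq[OF edge] by (simp add: swaps_star_def)
qed

lemma swaps_star_Hst:
  assumes x: "x \<in> Hst"
  shows "swaps_star x"
proof -
  have "swaps_star (c \<otimes> g) \<longleftrightarrow> swaps_star g" if c: "c \<in> {s, t}" and g: "g \<in> carrier G" for c g
  proof -
    obtain b where "c \<in> side_group b"
      using c generator_in_side_group[of False] generator_in_side_group[of True] by auto
    then have "side_group b #> (c \<otimes> g) = side_group b #> g"
      using r_coset_mult_left[OF subgroup_side_group _ g] by blast
    moreover have "c \<otimes> g \<in> carrier G"
      using c g s_closed t_closed by auto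
    ultimately show ?thesis
      using swaps_star_same_side[of "c \<otimes> g" b g] swaps_star_same_side[OF g, of b "c \<otimes> g"] by auto
  qed
  then have "swaps_star (x \<otimes> \<one>) \<longleftrightarrow> swaps_star \<one>"
    using generate_left_mult_invariant[of "{s, t}" x \<one> swaps_star] x s_closed t_closed by blast
  then show ?thesis
    using swaps_star_one x Hst_subset by auto
qed

lemma edge_map_mult_generator:
  assumes x: "x \<in> Hst"
  obtains m :: int where
    "edge_map ((if b then t else s) \<otimes> x) = (if b then s else t) [^] m \<otimes> edge_map x"
proof -
  define c where "c = (if b then t else s)"
  have c: "c \<in> side_group b"
    using generator_in_side_group by (simp add: c_def)
  have "c \<in> Hst"
    using c side_group_subset_Hst by blast
  then have xc: "x \<in> carrier G" "c \<otimes> x \<in> Hst"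
    using x Hst_subset subgroup.m_closed[OF subgroup_Hst] by auto
  have "coset_vertex b (c \<otimes> x) = coset_vertex b x"
    using r_coset_mult_left[OF subgroup_side_group c xc(1)] by (simp add: coset_vertex_eq_iff)
  then have "coset_vertex (\<not> b) (edge_map (c \<otimes> x)) = coset_vertex (\<not> b) (edge_map x)"
    using swaps_star_Hst[OF x] swaps_star_Hst[OF xc(2)] by (metis swaps_star_def sum.inject(1))
  then have "generate G {if b then s else t} #> edge_map (c \<otimes> x) =
      generate G {if b then s else t} #> edge_map x"
    by (cases b) (simp_all add: coset_vertex_eq_iff side_group_def)
  moreover have "edge_map (c \<otimes> x) \<in> carrier G" "edge_map x \<in> carrier G"
    using swaps_star_Hst[OF x] swaps_star_Hst[OF xc(2)] Hst_subset by (auto simp: swaps_star_def)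
  moreover have "(if b then s else t) \<in> carrier G"
    using s_closed t_closed by simp
  ultimately obtain m :: int where "edge_map (c \<otimes> x) = (if b then s else t) [^] m \<otimes> edge_map x"
    using r_coset_generate_eq_imp_pow by blast
  then show thesis
    using that by (simp add: c_def)
qed

lemma swap_map_edge_map: "swap_map G s t edge_map"
  unfolding swap_map_def
proof (intro conjI ballI)
  show "edge_map \<in> Hst \<rightarrow> Hst"
    using swaps_star_Hst by (auto simp: swaps_star_def)
  show "edge_map (edge_map x) = x" if "x \<in> Hst" for x
  proof -
    have "Inr (Phi_edge x) = \<phi> (\<phi> (Inr (Phi_edge x)))"
      using \<phi>_involutive Inr_Phi_edge_in_inc_V that Hst_subset by auto
    also have "\<dots> = Inr (Phi_edge (edge_map (edge_map x)))"
      using swaps_star_Hst[OF that] swaps_star_Hst[of "edge_map x"] by (simp add: swaps_star_def)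
    finally show ?thesis
      by simp
  qed
  show "edge_map \<one> = \<one>"
    using edge_map_eq[OF \<phi>_edge_one] .
  show "\<exists>(m::int) (n::int). edge_map (s \<otimes> x) = t [^] m \<otimes> edge_map x
      \<and> edge_map (t \<otimes> x) = s [^] n \<otimes> edge_map x" if x: "x \<in> Hst" for x
  proof -
    obtain m :: int where "edge_map (s \<otimes> x) = t [^] m \<otimes> edge_map x"
      using edge_map_mult_generator[OF x, of False] by auto
    moreover obtain n :: int where "edge_map (t \<otimes> x) = s [^] n \<otimes> edge_map x"
      using edge_map_mult_generator[OF x, of True] by auto
    ultimately show ?thesis
      by blast
  qed
qed

end

context two_generated
begin

lemma bij_adj_edge_one_neighbours:
  assumes \<alpha>: "bij_betw \<alpha> inc_V W"
    and adj: "\<And>p q. p \<in> inc_V \<Longrightarrow> q \<in> inc_V \<Longrightarrow> mg_adj inc p q \<longleftrightarrow> B (\<alpha> p) (\<alpha> q)"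
    and B_W: "\<And>p q. B p q \<Longrightarrow> q \<in> W"
  shows "B (\<alpha> (Inr (Phi_edge \<one>))) z \<longleftrightarrow>
    z = \<alpha> (Inl (coset_vertex False \<one>)) \<or> z = \<alpha> (Inl (coset_vertex True \<one>))"
proof -
  have "B (\<alpha> (Inr (Phi_edge \<one>))) z \<longleftrightarrow> (\<exists>u. mg_adj inc (Inr (Phi_edge \<one>)) u \<and> z = \<alpha> u)"
    using bij_adj_neighbour_iff[where A = "mg_adj inc", OF \<alpha> Inr_Phi_edge_in_inc_V[OF one_closed] adj]
      inc_adj_in_V B_W by blast
  then show ?thesis
    using inc_adj_edge_iff[OF one_closed] by (auto simp: ex_bool_eq)
qed

lemma ex_incidence_involution:
  assumes "group K" and S: "set S \<subseteq> carrier K" and iso: "mg_iso inc (Phi K S)"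
  shows "\<exists>\<phi>. incidence_involution G s t \<phi>"
proof -
  interpret K: group K by fact
  have iso': "mg_iso inc (Phi_vertices K S, fst (snd (Phi K S)), snd (snd (Phi K S)))"
    using iso by (simp only: Phi_split[symmetric])
  obtain \<alpha> where \<alpha>: "bij_betw \<alpha> inc_V (Phi_vertices K S)"
    and adj: "\<And>p q. p \<in> inc_V \<Longrightarrow> q \<in> inc_V \<Longrightarrow> mg_adj inc p q \<longleftrightarrow> mg_adj (Phi K S) (\<alpha> p) (\<alpha> q)"
    and simple: "inj_on (snd (snd (Phi K S))) (fst (snd (Phi K S)))"
    using mg_iso_adjE[OF iso' inc_ends_subset inj_on_inc_ends,
        unfolded Phi_split[symmetric]]
    by blast
  define v0 p q where "v0 = \<alpha> (Inr (Phi_edge \<one>))"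
    and "p = \<alpha> (Inl (coset_vertex False \<one>))" and "q = \<alpha> (Inl (coset_vertex True \<one>))"
  have in_V: "Inr (Phi_edge \<one>) \<in> inc_V" "Inl (coset_vertex b \<one>) \<in> inc_V" for b
    using Inr_Phi_edge_in_inc_V Inl_coset_vertex_in_inc_V by simp_all
  have B_V: "\<And>x z. mg_adj (Phi K S) x z \<Longrightarrow> z \<in> Phi_vertices K S"
    using mg_adj_Phi_vertices by blast
  have neighbours: "\<And>z. mg_adj (Phi K S) v0 z \<longleftrightarrow> z = p \<or> z = q"
    unfolding v0_def p_def q_def by (rule bij_adj_edge_one_neighbours[OF \<alpha> adj B_V])
  have "p \<noteq> q"
    using inj_onD[OF bij_betw_imp_inj_on[OF \<alpha>] _ in_V(2) in_V(2)]
    by (fastforce simp: p_def q_def coset_vertex_eq_iff)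
  moreover have "\<not> mg_adj (Phi K S) p q"
    using adj[OF in_V(2) in_V(2)] inc_not_adj_vertices by (simp add: p_def q_def)
  moreover have "v0 \<in> Phi_vertices K S"
    using \<alpha> in_V(1) by (auto simp: v0_def bij_betw_def)
  ultimately obtain k where k: "k \<in> carrier K" "k \<otimes>\<^bsub>K\<^esub> k = \<one>\<^bsub>K\<^esub>"
    and fix_v0: "Phi_rmult K k v0 = v0" and swap: "Phi_rmult K k p = q"
    using K.Phi_two_neighbours_swap[OF S simple _ neighbours] by blast
  define \<phi> where "\<phi> x = inv_into inc_V \<alpha> (Phi_rmult K k (\<alpha> x))" for x
  note conj = bij_conj_involution[where A = "mg_adj inc" and B = "mg_adj (Phi K S)",
      OF \<alpha> adj inc_adj_in_V K.Phi_rmult_vertex[OF S k(1)]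
      K.Phi_rmult_involutive[OF S k] K.Phi_rmult_adj[OF S k(1)], folded \<phi>_def]
  have "incidence_involution G s t \<phi>"
  proof unfold_locales
    show "\<phi> (Inr (Phi_edge \<one>)) = Inr (Phi_edge \<one>)"
      using fix_v0 inv_into_f_f[OF bij_betw_imp_inj_on[OF \<alpha>] in_V(1)] by (simp add: \<phi>_def v0_def)
    show "\<phi> (Inl (coset_vertex False \<one>)) = Inl (coset_vertex True \<one>)"
      using swap inv_into_f_f[OF bij_betw_imp_inj_on[OF \<alpha>] in_V(2)] by (simp add: \<phi>_def p_def q_def)
  qed (use conj in blast)+
  then show ?thesis
    by blast
qed

lemma G_graph_incidence_imp_swap_map:
  assumes "G_graph TYPE('k) (incidence (Phi G [s, t]))"
  shows "\<exists>f. swap_map G s t f"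
proof -
  obtain K :: "'k monoid" and S where "group K" "set S \<subseteq> carrier K" "mg_iso inc (Phi K S)"
    using assms unfolding G_graph_def incidence_Phi_eq by blast
  then obtain \<phi> where "incidence_involution G s t \<phi>"
    using ex_incidence_involution by blast
  then interpret incidence_involution G s t \<phi> .
  show ?thesis
    using swap_map_edge_map by blast
qed

lemma swap_map_generators:
  assumes "swap_map G s t f"
  shows "f s \<in> generate G {t}" and "f t \<in> generate G {s}"
proof -
  obtain m n :: int where "f (s \<otimes> \<one>) = t [^] m \<otimes> f \<one>" "f (t \<otimes> \<one>) = s [^] n \<otimes> f \<one>"
    and "f \<one> = \<one>"
    using assms subgroup.one_closed[OF subgroup_Hst] unfolding swap_map_def by blast
  then show "f s \<in> generate G {t}" "f t \<in> generate G {s}"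
    using generate_pow s_closed t_closed by auto
qed

end

section \<open>From the automorphism \<open>f\<close> to a \<open>G\<close>-graph structure on \<open>I\<Gamma>\<close>\<close>

locale swap_automorphism = two_generated +
  fixes f
  assumes f_hom: "f \<in> hom (G\<lparr>carrier := Hst\<rparr>) (G\<lparr>carrier := Hst\<rparr>)"
    and f_involutive: "x \<in> Hst \<Longrightarrow> f (f x) = x"
    and f_s: "f s \<in> generate G {t}" and f_t: "f t \<in> generate G {s}"
begin

sublocale Hst: group_hom "G\<lparr>carrier := Hst\<rparr>" "G\<lparr>carrier := Hst\<rparr>" f
  using subgroup_imp_group[OF subgroup_Hst] f_hom by (simp add: group_hom_def group_hom_axioms_def)

lemma f_closed: "x \<in> Hst \<Longrightarrow> f x \<in> Hst"
  using Hst.hom_closed by simp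

lemma f_mult: "x \<in> Hst \<Longrightarrow> y \<in> Hst \<Longrightarrow> f (x \<otimes> y) = f x \<otimes> f y"
  using Hst.hom_mult by simp

lemma f_one: "f \<one> = \<one>"
  using Hst.hom_one by simp

lemma f_side_group: "x \<in> side_group b \<Longrightarrow> f x \<in> side_group (\<not> b)"
proof -
  define c where "c = (if b then t else s)"
  have c: "c \<in> Hst" "f c \<in> side_group (\<not> b)"
    using f_s f_t s_closed t_closed by (auto simp: c_def side_group_def generate.incl)
  have "f ` side_group b = generate G {f c}"
    using Hst.generate_img[of "{c}"] c(1) f_closed generate_consistent[OF _ subgroup_Hst]
      side_group_subset_Hst
    by (simp add: c_def side_group_def)
  also have "\<dots> \<subseteq> side_group (\<not> b)"
    using generate_subgroup_incl[OF _ subgroup_side_group] c(2) by blast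
  finally show "x \<in> side_group b \<Longrightarrow> f x \<in> side_group (\<not> b)"
    by blast
qed

lemma f_translate_iff:
  assumes x: "x \<in> Hst" and y: "y \<in> Hst"
  shows "(\<exists>k\<in>generate G {t}. y = k \<otimes> x) \<longleftrightarrow> (\<exists>k\<in>generate G {s}. f y = k \<otimes> f x)"
proof
  assume "\<exists>k\<in>generate G {t}. y = k \<otimes> x"
  then obtain k where k: "k \<in> side_group True" "y = k \<otimes> x"
    by (auto simp: side_group_def)
  then have "f y = f k \<otimes> f x"
    using f_mult side_group_subset_Hst x by blast
  then show "\<exists>k\<in>generate G {s}. f y = k \<otimes> f x"
    using f_side_group[OF k(1)] by (auto simp: side_group_def)
next
  assume "\<exists>k\<in>generate G {s}. f y = k \<otimes> f x"
  then obtain k where k: "k \<in> side_group False" "f y = k \<otimes> f x"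
    by (auto simp: side_group_def)
  have "k \<in> Hst"
    using k(1) side_group_subset_Hst by blast
  have "y = f (f y)"
    using f_involutive[OF y] by simp
  also have "\<dots> = f k \<otimes> x"
    using k(2) f_mult[OF \<open>k \<in> Hst\<close> f_closed[OF x]] f_involutive[OF x] by simp
  finally have "y = f k \<otimes> x" .
  then show "\<exists>k\<in>generate G {t}. y = k \<otimes> x"
    using f_side_group[OF k(1)] by (auto simp: side_group_def)
qed

definition twist :: "bool \<Rightarrow> 'a \<Rightarrow> 'a" where
  "twist b x = (if b then f x else x)"

lemma twist_closed: "x \<in> Hst \<Longrightarrow> twist b x \<in> Hst"
  by (simp add: twist_def f_closed)

lemma twist_mult: "x \<in> Hst \<Longrightarrow> y \<in> Hst \<Longrightarrow> twist b (x \<otimes> y) = twist b x \<otimes> twist b y"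
  by (simp add: twist_def f_mult)

lemma twist_twist: "x \<in> Hst \<Longrightarrow> twist b (twist c x) = twist (b \<noteq> c) x"
  by (simp add: twist_def f_involutive)

lemma twist_one: "twist b \<one> = \<one>"
  by (simp add: twist_def f_one)

lemma f_twist: "x \<in> Hst \<Longrightarrow> f (twist b x) = twist (\<not> b) x"
  by (simp add: twist_def f_involutive)

lemma twist_inj: "x \<in> Hst \<Longrightarrow> y \<in> Hst \<Longrightarrow> twist b x = twist b y \<longleftrightarrow> x = y"
  using twist_twist[of x b b] twist_twist[of y b b] by (auto simp: twist_def)

definition semidirect :: "('a \<times> bool) monoid" where
  "semidirect = \<lparr>carrier = Hst \<times> UNIV,
     monoid.mult = (\<lambda>(h, b) (h', b'). (h \<otimes> twist b h', b \<noteq> b')), one = (\<one>, False)\<rparr>"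

lemma semidirect_simps [simp]:
  "carrier semidirect = Hst \<times> UNIV"
  "(h, b) \<otimes>\<^bsub>semidirect\<^esub> (h', b') = (h \<otimes> twist b h', b \<noteq> b')"
  "\<one>\<^bsub>semidirect\<^esub> = (\<one>, False)"
  by (simp_all add: semidirect_def)

lemma group_semidirect: "group semidirect"
proof (rule groupI)
  have Hst_mult: "x \<otimes> y \<in> Hst" if "x \<in> Hst" "y \<in> Hst" for x y
    using subgroup.m_closed[OF subgroup_Hst] that .
  show "x \<otimes>\<^bsub>semidirect\<^esub> y \<in> carrier semidirect"
    if "x \<in> carrier semidirect" "y \<in> carrier semidirect" for x y
    using that Hst_mult twist_closed by (cases x, cases y) auto
  show "\<one>\<^bsub>semidirect\<^esub> \<in> carrier semidirect"
    using subgroup.one_closed[OF subgroup_Hst] by simp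
  show "x \<otimes>\<^bsub>semidirect\<^esub> y \<otimes>\<^bsub>semidirect\<^esub> z = x \<otimes>\<^bsub>semidirect\<^esub> (y \<otimes>\<^bsub>semidirect\<^esub> z)"
    if "x \<in> carrier semidirect" "y \<in> carrier semidirect" "z \<in> carrier semidirect" for x y z
    using that Hst_subset twist_closed
    by (cases x, cases y, cases z) (auto simp: twist_mult twist_twist m_assoc subset_iff)
  show "\<one>\<^bsub>semidirect\<^esub> \<otimes>\<^bsub>semidirect\<^esub> x = x" if "x \<in> carrier semidirect" for x
    using that Hst_subset by (cases x) (auto simp: twist_def)
  show "\<exists>y\<in>carrier semidirect. y \<otimes>\<^bsub>semidirect\<^esub> x = \<one>\<^bsub>semidirect\<^esub>"
    if x_carrier: "x \<in> carrier semidirect" for x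
  proof -
    obtain h b where x: "x = (h, b)" "h \<in> Hst"
      using x_carrier by auto
    have "inv h \<in> Hst"
      using subgroup.m_inv_closed[OF subgroup_Hst x(2)] .
    moreover have "twist b (inv h) \<otimes> twist b h = \<one>"
      using x(2) calculation Hst_subset by (simp add: twist_mult[symmetric] twist_one subset_iff)
    ultimately show ?thesis
      using x twist_closed by (intro bexI[of _ "(twist b (inv h), b)"]) auto
  qed
qed

definition transversal_group :: "'a monoid" where
  "transversal_group = (SOME Q. group Q \<and> carrier Q = transversal Hst)"

lemma
  shows group_transversal_group: "group transversal_group"
    and carrier_transversal_group: "carrier transversal_group = transversal Hst"
proof -
  have "\<exists>Q :: 'a monoid. group Q \<and> carrier Q = transversal Hst"
    using ex_group_on[OF transversal_nonempty] by metis
  from someI_ex[OF this]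
  show "group transversal_group" "carrier transversal_group = transversal Hst"
    by (simp_all add: transversal_group_def)
qed

text \<open>\<open>model\<close> is the group \<open>K\<close> of the construction, \<open>model_group\<close> its copy on \<open>G \<times> bool\<close>.\<close>

definition model :: "(('a \<times> bool) \<times> 'a) monoid" where
  "model = semidirect \<times>\<times> transversal_group"

definition pair_of_model :: "('a \<times> bool) \<times> 'a \<Rightarrow> 'a \<times> bool" where
  "pair_of_model = (\<lambda>((h, b), x). (h \<otimes> x, b))"

lemma group_model: "group model"
  unfolding model_def using DirProd_group[OF group_semidirect group_transversal_group] .

lemma carrier_model: "carrier model = (Hst \<times> UNIV) \<times> transversal Hst"
  by (simp add: model_def carrier_transversal_group)

lemma mult_model:
  "((h, b), x) \<otimes>\<^bsub>model\<^esub> ((h', b'), x') = ((h \<otimes> twist b h', b \<noteq> b'), x \<otimes>\<^bsub>transversal_group\<^esub> x')"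
  by (simp add: model_def)

lemma one_model: "\<one>\<^bsub>model\<^esub> = ((\<one>, False), \<one>\<^bsub>transversal_group\<^esub>)"
  by (simp add: model_def)

lemma bij_pair_of_model: "bij_betw pair_of_model (carrier model) (carrier G \<times> UNIV)"
proof (rule bij_betw_imageI)
  note decomp = bij_betw_transversal[OF subgroup_Hst]
  show "inj_on pair_of_model (carrier model)"
    using bij_betw_imp_inj_on[OF decomp] by (auto simp: inj_on_def carrier_model pair_of_model_def)
  have mult_image: "(\<lambda>(h, x). h \<otimes> x) ` (Hst \<times> transversal Hst) = carrier G"
    using bij_betw_imp_surj_on[OF decomp] .
  show "pair_of_model ` carrier model = carrier G \<times> UNIV"
  proof (intro equalityI subsetI)
    fix y
    assume "y \<in> pair_of_model ` carrier model"
    then obtain h b x where "h \<in> Hst" "x \<in> transversal Hst" "y = (h \<otimes> x, b)"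
      by (auto simp: carrier_model pair_of_model_def)
    then show "y \<in> carrier G \<times> UNIV"
      using mult_image by blast
  next
    fix y
    assume "y \<in> carrier G \<times> (UNIV :: bool set)"
    then obtain g b where "g \<in> carrier G" "y = (g, b)"
      by blast
    moreover have "g \<in> (\<lambda>(h, x). h \<otimes> x) ` (Hst \<times> transversal Hst)"
      using mult_image calculation(1) by simp
    then obtain h x where "h \<in> Hst" "x \<in> transversal Hst" "g = h \<otimes> x"
      by auto
    ultimately show "y \<in> pair_of_model ` carrier model"
      by (auto simp: carrier_model pair_of_model_def image_iff)
  qed
qed

definition model_group :: "('a \<times> bool) monoid" where
  "model_group = transport_group model pair_of_model (carrier G \<times> UNIV)"

lemma group_model_group: "group model_group"
  unfolding model_group_def using group.group_transport_group[OF group_model bij_pair_of_model] .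

lemma iso_pair_of_model: "pair_of_model \<in> iso model model_group"
  unfolding model_group_def using group.iso_transport_group[OF group_model bij_pair_of_model] .

lemma pair_of_model_closed: "u \<in> carrier model \<Longrightarrow> pair_of_model u \<in> carrier model_group"
  using iso_pair_of_model by (auto simp: iso_def bij_betw_def)

definition model_a :: "('a \<times> bool) \<times> 'a" where
  "model_a = ((s, False), \<one>\<^bsub>transversal_group\<^esub>)"

definition model_b :: "('a \<times> bool) \<times> 'a" where
  "model_b = ((\<one>, True), \<one>\<^bsub>transversal_group\<^esub>)"

lemma one_transversal_group: "\<one>\<^bsub>transversal_group\<^esub> \<in> transversal Hst"
  using monoid.one_closed[OF group.is_monoid[OF group_transversal_group]] carrier_transversal_group
  by simp

lemma l_one_transversal_group: "x \<in> transversal Hst \<Longrightarrow> \<one>\<^bsub>transversal_group\<^esub> \<otimes>\<^bsub>transversal_group\<^esub> x = x"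
  using monoid.l_one[OF group.is_monoid[OF group_transversal_group]] carrier_transversal_group
  by simp

lemma model_a_carrier: "model_a \<in> carrier model"
  using s_closed one_transversal_group by (simp add: model_a_def carrier_model generate.incl)

lemma model_b_carrier: "model_b \<in> carrier model"
  using one_transversal_group subgroup.one_closed[OF subgroup_Hst] by (simp add: model_b_def carrier_model)

lemma generate_model_a:
  "generate model {model_a} = (\<lambda>k. ((k, False), \<one>\<^bsub>transversal_group\<^esub>)) ` generate G {s}"
proof -
  define \<iota> where "\<iota> k = ((k, False), \<one>\<^bsub>transversal_group\<^esub>)" for k :: 'a
  have "group_hom (G\<lparr>carrier := Hst\<rparr>) model \<iota>"
  proof (intro group_hom.intro group_hom_axioms.intro homI)
    show "group (G\<lparr>carrier := Hst\<rparr>)" "group model"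
      using subgroup_imp_group[OF subgroup_Hst] group_model .
    show "\<iota> x \<in> carrier model" if "x \<in> carrier (G\<lparr>carrier := Hst\<rparr>)" for x
      using that one_transversal_group by (simp add: \<iota>_def carrier_model)
    show "\<iota> (x \<otimes>\<^bsub>G\<lparr>carrier := Hst\<rparr>\<^esub> y) = \<iota> x \<otimes>\<^bsub>model\<^esub> \<iota> y" for x y
      using l_one_transversal_group[OF one_transversal_group]
      by (simp add: \<iota>_def mult_model twist_def)
  qed
  then have "generate model (\<iota> ` {s}) = \<iota> ` generate (G\<lparr>carrier := Hst\<rparr>) {s}"
    using group_hom.generate_img[of _ _ \<iota> "{s}"] generate.incl[of s "{s, t}" G] by fastforce
  then show ?thesis
    using generate_consistent[OF _ subgroup_Hst, of "{s}"] generate.incl[of s "{s, t}" G]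
    by (simp add: \<iota>_def model_a_def)
qed

lemma generate_model_b: "generate model {model_b} = {\<one>\<^bsub>model\<^esub>, model_b}"
proof -
  interpret M: group model
    by (rule group_model)
  have bb: "model_b \<otimes>\<^bsub>model\<^esub> model_b = \<one>\<^bsub>model\<^esub>"
    using l_one_transversal_group[OF one_transversal_group] f_one
    by (simp add: model_b_def mult_model one_model twist_def)
  have "subgroup {\<one>\<^bsub>model\<^esub>, model_b} model"
  proof (rule M.subgroupI)
    show "inv\<^bsub>model\<^esub> x \<in> {\<one>\<^bsub>model\<^esub>, model_b}" if "x \<in> {\<one>\<^bsub>model\<^esub>, model_b}" for x
      using that M.inv_equality[OF bb model_b_carrier model_b_carrier] by auto
    show "x \<otimes>\<^bsub>model\<^esub> y \<in> {\<one>\<^bsub>model\<^esub>, model_b}"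
      if "x \<in> {\<one>\<^bsub>model\<^esub>, model_b}" "y \<in> {\<one>\<^bsub>model\<^esub>, model_b}" for x y
      using that bb model_b_carrier by auto
  qed (use model_b_carrier in auto)
  then show ?thesis
    using M.generate_subgroup_incl[of "{model_b}"] generate.one[of model "{model_b}"]
      generate.incl[of model_b "{model_b}" model]
    by blast
qed

lemma model_r_coset_a_eq_iff:
  assumes u: "u \<in> carrier model" and w: "w \<in> carrier model"
  shows "generate model {model_a} #>\<^bsub>model\<^esub> u = generate model {model_a} #>\<^bsub>model\<^esub> w \<longleftrightarrow>
    (\<exists>k\<in>generate G {s}. w = ((k \<otimes> fst (fst u), snd (fst u)), snd u))"
proof -
  interpret M: group model
    by (rule group_model)
  obtain h b x where u_eq: "u = ((h, b), x)" and x: "x \<in> transversal Hst"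
    using u by (auto simp: carrier_model)
  have "generate model {model_a} #>\<^bsub>model\<^esub> u = generate model {model_a} #>\<^bsub>model\<^esub> w \<longleftrightarrow>
      w \<in> generate model {model_a} #>\<^bsub>model\<^esub> u"
    using M.r_coset_eq_iff_mem[OF M.generate_is_subgroup u w] model_a_carrier by simp
  also have "\<dots> \<longleftrightarrow> (\<exists>k\<in>generate G {s}. w = ((k \<otimes> fst (fst u), snd (fst u)), snd u))"
    unfolding generate_model_a r_coset_def using u_eq l_one_transversal_group[OF x]
    by (auto simp: mult_model twist_def)
  finally show ?thesis .
qed

lemma model_r_coset_b_eq_iff:
  assumes u: "u \<in> carrier model" and w: "w \<in> carrier model"
  shows "generate model {model_b} #>\<^bsub>model\<^esub> u = generate model {model_b} #>\<^bsub>model\<^esub> w \<longleftrightarrow>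
    w = u \<or> w = ((f (fst (fst u)), \<not> snd (fst u)), snd u)"
proof -
  interpret M: group model
    by (rule group_model)
  obtain h b x where u_eq: "u = ((h, b), x)" and h: "h \<in> Hst" and x: "x \<in> transversal Hst"
    using u by (auto simp: carrier_model)
  have "generate model {model_b} #>\<^bsub>model\<^esub> u = generate model {model_b} #>\<^bsub>model\<^esub> w \<longleftrightarrow>
      w \<in> generate model {model_b} #>\<^bsub>model\<^esub> u"
    using M.r_coset_eq_iff_mem[OF M.generate_is_subgroup u w] model_b_carrier by simp
  also have "\<dots> \<longleftrightarrow> w = u \<or> w = ((f (fst (fst u)), \<not> snd (fst u)), snd u)"
    unfolding generate_model_b r_coset_def using u_eq M.l_one[OF u] l_one_transversal_group[OF x]
      f_closed[OF h] Hst_subset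
    by (auto simp: model_b_def mult_model twist_def)
  finally show ?thesis .
qed

lemma model_group_r_coset_eq_iff:
  assumes "a \<in> carrier model" "u \<in> carrier model" "w \<in> carrier model"
  shows "generate model_group {pair_of_model a} #>\<^bsub>model_group\<^esub> pair_of_model u =
      generate model_group {pair_of_model a} #>\<^bsub>model_group\<^esub> pair_of_model w \<longleftrightarrow>
    generate model {a} #>\<^bsub>model\<^esub> u = generate model {a} #>\<^bsub>model\<^esub> w"
  using iso_r_coset_generate_eq_iff[OF group_model group_model_group iso_pair_of_model assms] .

lemma side_coset_eq_iff:
  assumes g: "g \<in> carrier G" and g': "g' \<in> carrier G"
  shows "side_group b #> g = side_group b #> g' \<longleftrightarrow>
    (\<exists>k\<in>generate G {s}. twist b (coset_part Hst g') = k \<otimes> twist b (coset_part Hst g))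
      \<and> coset_rep Hst g' = coset_rep Hst g"
proof (cases b)
  case True
  then show ?thesis
    using r_coset_eq_iff_coset_part[OF subgroup_Hst subgroup_side_group[of True]
        side_group_subset_Hst[of True] g g']
      f_translate_iff[OF coset_part_closed[OF subgroup_Hst g] coset_part_closed[OF subgroup_Hst g']]
    by (simp add: side_group_def twist_def)
next
  case False
  then show ?thesis
    using r_coset_eq_iff_coset_part[OF subgroup_Hst subgroup_side_group[of False]
        side_group_subset_Hst[of False] g g']
    by (simp add: side_group_def twist_def)
qed

text \<open>The incidence of \<open>\<langle>s\<rangle>g\<close> resp. \<open>\<langle>t\<rangle>g\<close> with the edge \<open>g = hx\<close> (\<open>h \<in> \<langle>s, t\<rangle>\<close>, \<open>x\<close> in the
  transversal) is labelled by the element of \<open>model\<close> sent to \<open>(g, False)\<close> resp. \<open>(f(h) x, True)\<close>.\<close>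

definition edge_label :: "(nat \<times> 'a set) \<times> (nat \<times> 'a set) \<times> (nat \<times> 'a set) \<times> 'a \<Rightarrow> ('a \<times> bool) \<times> 'a" where
  "edge_label = (\<lambda>((i, C), (_, _, g)). ((twist (i = 1) (coset_part Hst g), i = 1), coset_rep Hst g))"

lemma edge_label_eq:
  "edge_label (coset_vertex b g, Phi_edge g) = ((twist b (coset_part Hst g), b), coset_rep Hst g)"
  by (cases b) (simp_all add: edge_label_def coset_vertex_def Phi_edge_def)

lemma edge_label_carrier: "e \<in> inc_E \<Longrightarrow> edge_label e \<in> carrier model"
  unfolding inc_E_iff
  using coset_part_closed[OF subgroup_Hst] twist_closed
  by (auto simp: edge_label_eq carrier_model transversal_def)

lemma edge_label_inj:
  assumes g: "g \<in> carrier G" and g': "g' \<in> carrier G"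
    and eq: "edge_label (coset_vertex b g, Phi_edge g) = edge_label (coset_vertex b' g', Phi_edge g')"
  shows "b = b'" and "g = g'"
proof -
  show "b = b'"
    using eq by (simp add: edge_label_eq)
  then have "coset_part Hst g = coset_part Hst g'" "coset_rep Hst g = coset_rep Hst g'"
    using eq twist_inj coset_part_closed[OF subgroup_Hst g] coset_part_closed[OF subgroup_Hst g']
    by (simp_all add: edge_label_eq)
  then show "g = g'"
    using coset_part_mult_rep[OF subgroup_Hst g] coset_part_mult_rep[OF subgroup_Hst g'] by metis
qed

lemma bij_edge_label: "bij_betw edge_label inc_E (carrier model)"
proof (rule bij_betw_imageI)
  show "inj_on edge_label inc_E"
  proof (rule inj_onI)
    fix e e'
    assume e: "e \<in> inc_E" and e': "e' \<in> inc_E" and eq: "edge_label e = edge_label e'"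
    obtain b g where g: "g \<in> carrier G" "e = (coset_vertex b g, Phi_edge g)"
      using e unfolding inc_E_iff by blast
    obtain b' g' where g': "g' \<in> carrier G" "e' = (coset_vertex b' g', Phi_edge g')"
      using e' unfolding inc_E_iff by blast
    have "b = b'" "g = g'"
      using edge_label_inj[OF g(1) g'(1)] eq g(2) g'(2) by simp_all
    then show "e = e'"
      using g(2) g'(2) by simp
  qed
  have "u \<in> edge_label ` inc_E" if u: "u \<in> carrier model" for u
  proof -
    obtain h b x where u_eq: "u = ((h, b), x)" and h: "h \<in> Hst" and x: "x \<in> transversal Hst"
      using u by (auto simp: carrier_model)
    define g where "g = twist b h \<otimes> x"
    have "coset_part Hst g = twist b h" "coset_rep Hst g = x"
      using coset_part_mult_transversal[OF subgroup_Hst] coset_rep_mult_transversal[OF subgroup_Hst]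
        twist_closed[OF h] x by (simp_all add: g_def)
    then have "edge_label (coset_vertex b g, Phi_edge g) = u"
      using twist_twist[OF h] u_eq by (simp add: edge_label_eq twist_def)
    moreover have "g \<in> carrier G"
      using twist_closed[OF h] x Hst_subset transversal_subset[OF subgroup_Hst] by (auto simp: g_def)
    ultimately show ?thesis
      by (auto simp: inc_E_def)
  qed
  then show "edge_label ` inc_E = carrier model"
    using edge_label_carrier by blast
qed

lemma edge_label_same_vertex_iff:
  assumes "e \<in> inc_E" "e' \<in> inc_E"
  shows "fst e = fst e' \<longleftrightarrow> (\<exists>k\<in>generate G {s}.
    edge_label e' = ((k \<otimes> fst (fst (edge_label e)), snd (fst (edge_label e))), snd (edge_label e)))"
proof -
  obtain b g b' g' where g: "g \<in> carrier G" "e = (coset_vertex b g, Phi_edge g)"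
    and g': "g' \<in> carrier G" "e' = (coset_vertex b' g', Phi_edge g')"
    using assms unfolding inc_E_iff by blast
  show ?thesis
    using side_coset_eq_iff[OF g(1) g'(1), of b]
    by (auto simp: g(2) g'(2) coset_vertex_eq_iff edge_label_eq)
qed

lemma edge_label_same_edge_iff:
  assumes "e \<in> inc_E" "e' \<in> inc_E"
  shows "snd e = snd e' \<longleftrightarrow> edge_label e' = edge_label e
    \<or> edge_label e' = ((f (fst (fst (edge_label e))), \<not> snd (fst (edge_label e))), snd (edge_label e))"
proof -
  obtain b g b' g' where g: "g \<in> carrier G" "e = (coset_vertex b g, Phi_edge g)"
    and g': "g' \<in> carrier G" "e' = (coset_vertex b' g', Phi_edge g')"
    using assms unfolding inc_E_iff by blast
  have "((f (fst (fst (edge_label e))), \<not> snd (fst (edge_label e))), snd (edge_label e)) =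
      edge_label (coset_vertex (\<not> b) g, Phi_edge g)"
    using f_twist[OF coset_part_closed[OF subgroup_Hst g(1)]] by (simp add: g(2) edge_label_eq)
  then show ?thesis
    using edge_label_inj[OF g'(1) g(1)] g(2) g'(2) by (cases "b = b'") auto
qed

theorem mg_iso_incidence_model: "mg_iso inc (Phi model_group [pair_of_model model_a, pair_of_model model_b])"
proof (rule group.mg_iso_Phi_pairI[OF group_model_group, where \<beta> = "pair_of_model \<circ> edge_label"
      and P = "\<lambda>e. Inl (fst e)" and Q = "\<lambda>e. Inr (snd e)"])
  show "pair_of_model model_a \<in> carrier model_group" "pair_of_model model_b \<in> carrier model_group"
    using pair_of_model_closed model_a_carrier model_b_carrier by simp_all
  show "bij_betw (pair_of_model \<circ> edge_label) inc_E (carrier model_group)"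
    using bij_betw_trans[OF bij_edge_label bij_pair_of_model] by (simp add: model_group_def)
  show "inc_ends e = {Inl (fst e), Inr (snd e)}" for e
    by (cases e) simp
  show "inc_V = (\<lambda>e. Inl (fst e)) ` inc_E \<union> (\<lambda>e. Inr (snd e)) ` inc_E"
    by (rule inc_V_eq_ends)
  show "Inl (fst e) \<noteq> Inr (snd e')" for e e'
    by simp
  show "Inl (fst e) = Inl (fst e') \<longleftrightarrow> generate model_group {pair_of_model model_a} #>\<^bsub>model_group\<^esub>
      (pair_of_model \<circ> edge_label) e = generate model_group {pair_of_model model_a} #>\<^bsub>model_group\<^esub>
      (pair_of_model \<circ> edge_label) e'" if "e \<in> inc_E" "e' \<in> inc_E" for e e'
    using edge_label_same_vertex_iff[OF that]
      model_group_r_coset_eq_iff[OF model_a_carrier edge_label_carrier edge_label_carrier, OF that]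
      model_r_coset_a_eq_iff[OF edge_label_carrier edge_label_carrier, OF that]
    by simp
  show "Inr (snd e) = Inr (snd e') \<longleftrightarrow> generate model_group {pair_of_model model_b} #>\<^bsub>model_group\<^esub>
      (pair_of_model \<circ> edge_label) e = generate model_group {pair_of_model model_b} #>\<^bsub>model_group\<^esub>
      (pair_of_model \<circ> edge_label) e'" if "e \<in> inc_E" "e' \<in> inc_E" for e e'
    using edge_label_same_edge_iff[OF that]
      model_group_r_coset_eq_iff[OF model_b_carrier edge_label_carrier edge_label_carrier, OF that]
      model_r_coset_b_eq_iff[OF edge_label_carrier edge_label_carrier, OF that]
    by simp
qed

theorem G_graph_incidence: "G_graph TYPE('a \<times> bool) (incidence (Phi G [s, t]))"
  unfolding G_graph_def incidence_Phi_eq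
  using group_model_group mg_iso_incidence_model pair_of_model_closed model_a_carrier model_b_carrier
  by (intro exI[of _ model_group] exI[of _ "[pair_of_model model_a, pair_of_model model_b]"]) auto

end

theorem theorem2:
  fixes G :: "('a, 'b) monoid_scheme" and s t :: 'a
  assumes "group G" and "s \<in> carrier G" and "t \<in> carrier G" and "s \<noteq> t"
  shows
   "(G_graph TYPE('k) (incidence (Phi G [s, t])) \<longrightarrow>
      (\<exists>f. f \<in> generate G {s, t} \<rightarrow> generate G {s, t}
         \<and> (\<forall>x\<in>generate G {s, t}. f (f x) = x)
         \<and> f \<one>\<^bsub>G\<^esub> = \<one>\<^bsub>G\<^esub>
         \<and> (\<forall>x\<in>generate G {s, t}. \<exists>(m::int) (n::int).
               f (s \<otimes>\<^bsub>G\<^esub> x) = t [^]\<^bsub>G\<^esub> m \<otimes>\<^bsub>G\<^esub> f x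
             \<and> f (t \<otimes>\<^bsub>G\<^esub> x) = s [^]\<^bsub>G\<^esub> n \<otimes>\<^bsub>G\<^esub> f x)))
    \<and>
    ((\<exists>f. f \<in> hom (G\<lparr>carrier := generate G {s, t}\<rparr>) (G\<lparr>carrier := generate G {s, t}\<rparr>)
         \<and> (\<forall>x\<in>generate G {s, t}. f (f x) = x)
         \<and> f \<one>\<^bsub>G\<^esub> = \<one>\<^bsub>G\<^esub>
         \<and> (\<forall>x\<in>generate G {s, t}. \<exists>(m::int) (n::int).
               f (s \<otimes>\<^bsub>G\<^esub> x) = t [^]\<^bsub>G\<^esub> m \<otimes>\<^bsub>G\<^esub> f x
             \<and> f (t \<otimes>\<^bsub>G\<^esub> x) = s [^]\<^bsub>G\<^esub> n \<otimes>\<^bsub>G\<^esub> f x))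
      \<longrightarrow> G_graph TYPE('a \<times> bool) (incidence (Phi G [s, t])))"
proof -
  interpret two_generated G s t
    using assms by (simp add: two_generated_def two_generated_axioms_def)
  have "G_graph TYPE('a \<times> bool) (incidence (Phi G [s, t]))"
    if hom: "f \<in> hom (G\<lparr>carrier := Hst\<rparr>) (G\<lparr>carrier := Hst\<rparr>)"
      and swap: "(\<forall>x\<in>Hst. f (f x) = x) \<and> f \<one>\<^bsub>G\<^esub> = \<one>\<^bsub>G\<^esub> \<and> (\<forall>x\<in>Hst. \<exists>(m::int) (n::int).
        f (s \<otimes>\<^bsub>G\<^esub> x) = t [^]\<^bsub>G\<^esub> m \<otimes>\<^bsub>G\<^esub> f x
        \<and> f (t \<otimes>\<^bsub>G\<^esub> x) = s [^]\<^bsub>G\<^esub> n \<otimes>\<^bsub>G\<^esub> f x)" for f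
  proof -
    have "swap_map G s t f"
      using hom swap unfolding swap_map_def hom_def by auto
    then interpret swap_automorphism G s t f
      using hom swap_map_generators by unfold_locales (auto simp: swap_map_def)
    show ?thesis
      by (rule G_graph_incidence)
  qed
  then show ?thesis
    unfolding swap_map_def[symmetric] using G_graph_incidence_imp_swap_map by blast
qed

end
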